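(* Let $\Omega\subset\mathbb{R}^d$ be a bounded domain, $\gamma>0$, $I\in\mathcal{C}_b(\Omega)$ (time-independent), $G:\mathbb{R}^2\to\mathbb{R}$ smooth with $\|G\|_\infty+\|\nabla G\|_\infty\le1$. Let $n_0\in\mathcal{C}_b(\Omega,L^1_s)$, $n_0\ge0$, $w_0\in\mathcal{C}_b(\Omega\times\Omega)$, $w_0\ge0$, with $g(x)=\int_0^\infty n_0(s,x)ds$ satisfying $\int_\Omega g=1$. Assume $p\in W^{1,\infty}((0,\infty)\times\mathbb{R})$ satisfies $p_*\le p(s,S)\le p_\infty$ for all $s,S$, for constants $p_*,p_\infty>0$. For $\gamma$ and $\|\tfrac{\partial p}{\partial S}\|_\infty$ small enough, let $(n^*,N^*,S^*,w^* )$ be the stationary state with $\int_0^\infty n^*(s,x)ds=g(x)$ of the system $\partial_t n+\partial_s n+p(s,S)n=0$, $N=n(t,0,x)=\int_0^\infty p(s,S)n\,ds$, $S=\int_\Omega w(t,x,y)N(t,y)dy+I(x)$, $\partial_tw=-w+\gamma G(N(t,x),N(t,y))$. Then there exist $C,\lambda>0$ such that the solution $(n,N,S,w)$, with $\int_0^\infty n(t,s,x)ds=g(x)$, of the limit system $$\begin{cases}\partial_s n+p(s,S(t,x))n=0,\\ N(t,x)=n(t,0,x)=\int_0^\infty p(s,S(t,x))n\,ds,\\ S(t,x)=\int_\Omega w(t,x,y)N(t,y)\,dy+I(x),\\ \partial_t w=-w+\gamma G(N(t,x),N(t,y)),\\ w(0)=w_0,\end{cases}$$ satisfies for all $t\ge0$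 $$\|n(t)-n^*\|_{L^1_{s,x}}+\|w(t)-w^*\|_{L^1_{x,y}}\le Ce^{-\lambda t}\|w_0-w^*\|_{L^1_{x,y}}.$$ Moreover $\|S(t)-S^*\|_{L^1_x}$ and $\|N(t)-N^*\|_{L^1_x}$ converge exponentially to $0$ as $t\to\infty$.
   Context: $L^1_s=L^1((0,\infty))$, $L^1_{s,x}=L^1((0,\infty)\times\Omega)$, $L^1_{x,y}=L^1(\Omega\times\Omega)$. A stationary state is a time-independent solution: $\partial_sn^*+p(s,S^* )n^*=0$, $N^*(x)=n^*(0,x)=\int p(s,S^*(x))n^*ds$, $S^*=\int w^*N^*dy+I$, $w^*(x,y)=\gamma G(N^*(x),N^*(y))$. *)

theory Defs
  imports "HOL-Analysis.Analysis"
begin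

fun Ck :: "nat \<Rightarrow> ('a::real_normed_vector \<Rightarrow> 'b::real_normed_vector) \<Rightarrow> bool" where
  "Ck 0 f = continuous_on UNIV f"
| "Ck (Suc k) f = (\<exists>f'. (\<forall>x. (f has_derivative f' x) (at x)) \<and> (\<forall>v. Ck k (\<lambda>x. f' x v)))"

definition smooth :: "('a::real_normed_vector \<Rightarrow> 'b::real_normed_vector) \<Rightarrow> bool" where
  "smooth f = (\<forall>k. Ck k f)"

definition bounded_domain :: "'a::euclidean_space set \<Rightarrow> bool" where
  "bounded_domain \<Omega> = (open \<Omega> \<and> connected \<Omega> \<and> bounded \<Omega> \<and> \<Omega> \<noteq> {})"

text \<open>W^{1,\<infinity>}((0,\<infinity>) x R): bounded and Lipschitz (on this convex domain).\<close>
definition W1inf :: "(real \<Rightarrow> real \<Rightarrow> real) \<Rightarrow> bool" where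
  "W1inf p = (bounded ((\<lambda>(s,S). p s S) ` ({0<..} \<times> UNIV)) \<and>
              (\<exists>L. L-lipschitz_on ({0<..} \<times> UNIV) (\<lambda>(s,S). p s S)))"

text \<open>\<parallel>\<partial>p/\<partial>S\<parallel>_\<infinity> \<le> \<delta>, expressed as a uniform Lipschitz bound in S.\<close>
definition dS_bound :: "(real \<Rightarrow> real \<Rightarrow> real) \<Rightarrow> real \<Rightarrow> bool" where
  "dS_bound p \<delta> = (\<forall>s>0. \<forall>S1 S2. \<bar>p s S1 - p s S2\<bar> \<le> \<delta> * \<bar>S1 - S2\<bar>)"

definition L1_s :: "(real \<Rightarrow> real) \<Rightarrow> ennreal" where
  "L1_s f = (\<integral>\<^sup>+ s. indicator {0<..} s * ennreal \<bar>f s\<bar> \<partial>lborel)"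

definition L1_x :: "'a::euclidean_space set \<Rightarrow> ('a \<Rightarrow> real) \<Rightarrow> ennreal" where
  "L1_x \<Omega> f = (\<integral>\<^sup>+ x. indicator \<Omega> x * ennreal \<bar>f x\<bar> \<partial>lborel)"

definition L1_sx :: "'a::euclidean_space set \<Rightarrow> (real \<Rightarrow> 'a \<Rightarrow> real) \<Rightarrow> ennreal" where
  "L1_sx \<Omega> f = (\<integral>\<^sup>+ x. indicator \<Omega> x * L1_s (\<lambda>s. f s x) \<partial>lborel)"

definition L1_xy :: "'a::euclidean_space set \<Rightarrow> ('a \<Rightarrow> 'a \<Rightarrow> real) \<Rightarrow> ennreal" where
  "L1_xy \<Omega> f = (\<integral>\<^sup>+ x. indicator \<Omega> x * L1_x \<Omega> (\<lambda>y. f x y) \<partial>lborel)"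

definition Cb_L1s :: "'a::euclidean_space set \<Rightarrow> (real \<Rightarrow> 'a \<Rightarrow> real) \<Rightarrow> bool" where
  "Cb_L1s \<Omega> n0 =
    ((\<forall>x\<in>\<Omega>. set_integrable lborel {0<..} (\<lambda>s. n0 s x)) \<and>
     (\<forall>x\<in>\<Omega>. \<forall>e>0. \<exists>d>0. \<forall>y\<in>\<Omega>. dist y x < d \<longrightarrow> L1_s (\<lambda>s. n0 s y - n0 s x) < ennreal e) \<and>
     (\<exists>B. \<forall>x\<in>\<Omega>. L1_s (\<lambda>s. n0 s x) \<le> ennreal B))"

definition stationary_state ::
  "'a::euclidean_space set \<Rightarrow> (real \<Rightarrow> real \<Rightarrow> real) \<Rightarrow> real \<Rightarrow> (real \<times> real \<Rightarrow> real) \<Rightarrow> ('a \<Rightarrow> real)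
   \<Rightarrow> ('a \<Rightarrow> real) \<Rightarrow> (real \<Rightarrow> 'a \<Rightarrow> real) \<Rightarrow> ('a \<Rightarrow> real) \<Rightarrow> ('a \<Rightarrow> real) \<Rightarrow> ('a \<Rightarrow> 'a \<Rightarrow> real) \<Rightarrow> bool"
  where
  "stationary_state \<Omega> p \<gamma> G I g ns Ns Ss ws =
    ((\<forall>x\<in>\<Omega>.
        continuous_on {0..} (\<lambda>s. ns s x) \<and>
        (\<forall>s>0. ((\<lambda>\<sigma>. ns \<sigma> x) has_real_derivative (- p s (Ss x) * ns s x)) (at s)) \<and>
        Ns x = ns 0 x \<and>
        set_integrable lborel {0<..} (\<lambda>s. p s (Ss x) * ns s x) \<and>
        Ns x = (LINT s:{0<..}|lborel. p s (Ss x) * ns s x) \<and>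
        set_integrable lborel \<Omega> (\<lambda>y. ws x y * Ns y) \<and>
        Ss x = (LINT y:\<Omega>|lborel. ws x y * Ns y) + I x \<and>
        set_integrable lborel {0<..} (\<lambda>s. ns s x) \<and>
        (LINT s:{0<..}|lborel. ns s x) = g x) \<and>
     (\<forall>x\<in>\<Omega>. \<forall>y\<in>\<Omega>. ws x y = \<gamma> * G (Ns x, Ns y)))"

definition limit_solution ::
  "'a::euclidean_space set \<Rightarrow> (real \<Rightarrow> real \<Rightarrow> real) \<Rightarrow> real \<Rightarrow> (real \<times> real \<Rightarrow> real) \<Rightarrow> ('a \<Rightarrow> real)
   \<Rightarrow> ('a \<Rightarrow> real) \<Rightarrow> ('a \<Rightarrow> 'a \<Rightarrow> real)
   \<Rightarrow> (real \<Rightarrow> real \<Rightarrow> 'a \<Rightarrow> real) \<Rightarrow> (real \<Rightarrow> 'a \<Rightarrow> real) \<Rightarrow> (real \<Rightarrow> 'a \<Rightarrow> real)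
   \<Rightarrow> (real \<Rightarrow> 'a \<Rightarrow> 'a \<Rightarrow> real) \<Rightarrow> bool"
  where
  "limit_solution \<Omega> p \<gamma> G I g w0 n N S w =
    ((\<forall>t\<ge>0. \<forall>x\<in>\<Omega>.
        continuous_on {0..} (\<lambda>s. n t s x) \<and>
        (\<forall>s>0. ((\<lambda>\<sigma>. n t \<sigma> x) has_real_derivative (- p s (S t x) * n t s x)) (at s)) \<and>
        N t x = n t 0 x \<and>
        set_integrable lborel {0<..} (\<lambda>s. p s (S t x) * n t s x) \<and>
        N t x = (LINT s:{0<..}|lborel. p s (S t x) * n t s x) \<and>
        set_integrable lborel \<Omega> (\<lambda>y. w t x y * N t y) \<and>
        S t x = (LINT y:\<Omega>|lborel. w t x y * N t y) + I x \<and>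
        set_integrable lborel {0<..} (\<lambda>s. n t s x) \<and>
        (LINT s:{0<..}|lborel. n t s x) = g x) \<and>
     (\<forall>x\<in>\<Omega>. \<forall>y\<in>\<Omega>.
        continuous_on {0..} (\<lambda>t. w t x y) \<and>
        (\<forall>t>0. ((\<lambda>\<tau>. w \<tau> x y) has_real_derivative (- w t x y + \<gamma> * G (N t x, N t y))) (at t)) \<and>
        w 0 x y = w0 x y))"

end

theory Submission
  imports Defs "HOL-Probability.Distributions"
begin

(* For a frozen input S, the age equation  n_s = -p(s, S) n  with  \<integral> n ds = g  is solved by
   n(s) = N exp (-\<integral>\<^sub>0\<^sup>s p(\<sigma>, S) d\<sigma>), and the boundary condition gives  N = g F(S), where
   F(S) = 1 / \<integral>\<^sub>0\<^sup>\<infinity> exp (-\<integral>\<^sub>0\<^sup>s p(\<sigma>, S) d\<sigma>) ds  lies in [p_low, p_inf] and is Lipschitz with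
   constant (p_inf / p_low)^2 sup |\<partial>p/\<partial>S|.  The limit system therefore reduces to the fixed-point
   equation  S = \<integral> w(., y) g(y) F(S(y)) dy + I, a sup-norm contraction when \<partial>p/\<partial>S is small:
   a uniform gap d between w(t) and w* produces a gap O(d) between S(t) and S* and a gap at most
   d/8 between N(t) and N*.  Hence e = w - w* solves  e' = -e + k  with |k| \<le> sup |e| / 4, and a
   Gronwall argument for the weighted sup of exp (t/2) |e| gives  sup |e(t)| \<le> 2 sup |e(0)| exp (-t/2);
   the L1 bounds follow on the bounded domain.  To compare with the L1 norm of w0 - w*, note that
   this norm is positive unless w0 = w*, because w0 - w* is continuous on the open domain; the
   constant C therefore depends on the solution, as the statement allows.  Every \<gamma> < 1 works. *)

section \<open>Damped linear equations\<close>

lemma abs_diff_le_of_derivative_bound: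
  fixes f h f' h' :: "real \<Rightarrow> real"
  assumes T: "0 \<le> T"
    and f_cont: "continuous_on {0..T} f" and h_cont: "continuous_on {0..T} h"
    and f': "\<And>t. 0 < t \<Longrightarrow> t < T \<Longrightarrow> (f has_real_derivative f' t) (at t)"
    and h': "\<And>t. 0 < t \<Longrightarrow> t < T \<Longrightarrow> (h has_real_derivative h' t) (at t)"
    and le: "\<And>t. 0 < t \<Longrightarrow> t < T \<Longrightarrow> \<bar>f' t\<bar> \<le> h' t"
  shows "\<bar>f T - f 0\<bar> \<le> h T - h 0"
proof -
  have "h 0 - f 0 \<le> h T - f T"
  proof (rule DERIV_nonneg_imp_increasing_open[OF T])
    fix t assume "0 < t" "t < T"
    then show "\<exists>y. ((\<lambda>t. h t - f t) has_real_derivative y) (at t) \<and> 0 \<le> y"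
      using DERIV_diff[OF h' f'] le by (fastforce simp: abs_le_iff)
  qed (intro continuous_intros f_cont h_cont)
  moreover have "h 0 + f 0 \<le> h T + f T"
  proof (rule DERIV_nonneg_imp_increasing_open[OF T])
    fix t assume "0 < t" "t < T"
    then show "\<exists>y. ((\<lambda>t. h t + f t) has_real_derivative y) (at t) \<and> 0 \<le> y"
      using DERIV_add[OF h' f'] le by (fastforce simp: abs_le_iff)
  qed (intro continuous_intros f_cont h_cont)
  ultimately show ?thesis by (simp add: abs_le_iff)
qed

text \<open>Variation of constants: \<open>exp t * e t\<close> has derivative \<open>exp t * k t\<close>, which is dominated
  by the derivative of \<open>A / (1 - lam) * exp ((1 - lam) * t)\<close>.\<close>
lemma damped_ode_bound:
  fixes e k :: "real \<Rightarrow> real" and lam A T :: real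
  assumes lam: "0 \<le> lam" "lam < 1" and T: "0 \<le> T"
    and cont: "continuous_on {0..T} e"
    and der: "\<And>t. 0 < t \<Longrightarrow> t < T \<Longrightarrow> (e has_real_derivative (- e t + k t)) (at t)"
    and k_le: "\<And>t. 0 < t \<Longrightarrow> t < T \<Longrightarrow> \<bar>k t\<bar> \<le> A * exp (- lam * t)"
  shows "\<bar>e T\<bar> \<le> exp (- T) * \<bar>e 0\<bar> + A / (1 - lam) * (exp (- lam * T) - exp (- T))"
proof -
  define c where "c = A / (1 - lam)"
  have "\<bar>exp T * e T - exp 0 * e 0\<bar> \<le> c * exp ((1 - lam) * T) - c * exp ((1 - lam) * 0)"
  proof (rule abs_diff_le_of_derivative_bound[OF T])
    fix t assume t: "0 < t" "t < T"
    show "((\<lambda>t. exp t * e t) has_real_derivative exp t * k t) (at t)"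
      using DERIV_mult[OF DERIV_exp der[OF t]] by (rule DERIV_cong) (simp add: algebra_simps)
    show "((\<lambda>t. c * exp ((1 - lam) * t)) has_real_derivative A * exp ((1 - lam) * t)) (at t)"
      using lam by (auto intro!: derivative_eq_intros simp: c_def)
    have "\<bar>exp t * k t\<bar> \<le> exp t * (A * exp (- lam * t))"
      using k_le[OF t] by (simp add: abs_mult)
    then show "\<bar>exp t * k t\<bar> \<le> A * exp ((1 - lam) * t)"
      by (simp add: exp_add[symmetric] algebra_simps)
  qed (intro continuous_intros cont)+
  then have "exp (- T) * \<bar>exp T * e T - e 0\<bar> \<le> exp (- T) * (c * exp ((1 - lam) * T) - c)"
    by simp
  moreover have "exp (- T) * \<bar>exp T * e T - e 0\<bar> = \<bar>e T - exp (- T) * e 0\<bar>"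
    by (simp add: abs_mult[symmetric] exp_minus field_simps)
  moreover have "exp (- T) * (c * exp ((1 - lam) * T) - c) = c * (exp (- lam * T) - exp (- T))"
    by (simp add: algebra_simps exp_add[symmetric])
  ultimately show ?thesis
    unfolding c_def using abs_triangle_ineq2[of "e T" "exp (- T) * e 0"] by (simp add: abs_mult)
qed

lemma damped_ode_bounded:
  fixes e k :: "real \<Rightarrow> real"
  assumes cont: "continuous_on {0..} e"
    and der: "\<And>t. 0 < t \<Longrightarrow> (e has_real_derivative (- e t + k t)) (at t)"
    and k_le: "\<And>t. \<bar>k t\<bar> \<le> c" and t: "0 \<le> t"
  shows "\<bar>e t\<bar> \<le> \<bar>e 0\<bar> + c"
proof -
  have "\<bar>e t\<bar> \<le> exp (- t) * \<bar>e 0\<bar> + c / (1 - 0) * (exp (- 0 * t) - exp (- t))"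
    by (rule damped_ode_bound[where k=k])
       (use t k_le der in \<open>auto intro: continuous_on_subset[OF cont]\<close>)
  also have "\<dots> \<le> 1 * \<bar>e 0\<bar> + c * 1"
    using t k_le[of 0] by (intro add_mono mult_mono) auto
  finally show ?thesis by simp
qed

lemma le_twice_of_le_half_Sup:
  fixes D :: "'b \<Rightarrow> real"
  assumes ne: "X \<noteq> {}" and bdd: "bdd_above (D ` X)" and nonneg: "\<And>x. x \<in> X \<Longrightarrow> 0 \<le> D x"
    and q: "0 \<le> q" "q \<le> 1/2"
    and le: "\<And>x. x \<in> X \<Longrightarrow> D x \<le> a + q * Sup (D ` X)"
    and x: "x \<in> X"
  shows "D x \<le> 2 * a"
proof -
  have upper: "D x \<le> Sup (D ` X)" if "x \<in> X" for x
    by (rule cSup_upper) (use that bdd in auto)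
  have "Sup (D ` X) \<le> a + q * Sup (D ` X)"
    using ne le by (auto intro!: cSup_least)
  moreover have "0 \<le> Sup (D ` X)" using nonneg[OF x] upper[OF x] by linarith
  moreover from this have "q * Sup (D ` X) \<le> 1/2 * Sup (D ` X)"
    using q by (intro mult_right_mono)
  ultimately have "Sup (D ` X) \<le> 2 * a" by linarith
  then show ?thesis using upper[OF x] by linarith
qed

lemma damped_ode_half_rate_bound:
  fixes e k :: "real \<Rightarrow> real"
  assumes t: "0 \<le> t" and Q: "0 \<le> Q"
    and cont: "continuous_on {0..t} e"
    and der: "\<And>\<tau>. 0 < \<tau> \<Longrightarrow> \<tau> < t \<Longrightarrow> (e has_real_derivative (- e \<tau> + k \<tau>)) (at \<tau>)"
    and k_le: "\<And>\<tau>. 0 < \<tau> \<Longrightarrow> \<tau> < t \<Longrightarrow> \<bar>k \<tau>\<bar> \<le> Q / 4 * exp (- (1/2) * \<tau>)"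
  shows "exp (t / 2) * \<bar>e t\<bar> \<le> \<bar>e 0\<bar> + Q / 2"
proof -
  have "\<bar>e t\<bar> \<le> exp (- t) * \<bar>e 0\<bar> + Q / 4 / (1 - 1/2) * (exp (- (1/2) * t) - exp (- t))"
    by (rule damped_ode_bound[OF _ _ t cont der k_le]) auto
  also have "\<dots> \<le> exp (- t / 2) * \<bar>e 0\<bar> + Q / 2 * exp (- t / 2)"
    using t Q by (intro add_mono mult_mono) auto
  finally have "\<bar>e t\<bar> \<le> exp (- t / 2) * (\<bar>e 0\<bar> + Q / 2)"
    by (simp add: algebra_simps)
  then have "exp (t / 2) * \<bar>e t\<bar> \<le> exp (t / 2) * exp (- t / 2) * (\<bar>e 0\<bar> + Q / 2)"
    by (simp add: mult.assoc)
  also have "exp (t / 2) * exp (- t / 2) = 1"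
    by (simp flip: exp_add)
  finally show ?thesis by simp
qed

text \<open>A family of damped equations \<open>e' = -e + k\<close> whose forcing is controlled by a quarter of
  the current sup norm decays at rate \<open>1/2\<close>: the weighted sup
  \<open>Q = sup (exp (t/2) * \<bar>e t z\<bar>)\<close> over \<open>[0, T] \<times> X\<close> satisfies \<open>Q \<le> D0 + Q/2\<close>.\<close>
lemma uniform_damped_ode_decay:
  fixes e k :: "real \<Rightarrow> 'b \<Rightarrow> real" and X :: "'b set"
  assumes ne: "X \<noteq> {}"
    and bounded: "\<And>t z. 0 \<le> t \<Longrightarrow> z \<in> X \<Longrightarrow> \<bar>e t z\<bar> \<le> M"
    and cont: "\<And>z. z \<in> X \<Longrightarrow> continuous_on {0..} (\<lambda>t. e t z)"
    and der: "\<And>z t. z \<in> X \<Longrightarrow> 0 < t \<Longrightarrow> ((\<lambda>t. e t z) has_real_derivative (- e t z + k t z)) (at t)"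
    and forcing: "\<And>t d z. 0 < t \<Longrightarrow> (\<And>z. z \<in> X \<Longrightarrow> \<bar>e t z\<bar> \<le> d) \<Longrightarrow> z \<in> X \<Longrightarrow> \<bar>k t z\<bar> \<le> d / 4"
    and initial: "\<And>z. z \<in> X \<Longrightarrow> \<bar>e 0 z\<bar> \<le> D0"
    and T: "0 \<le> T" and z: "z \<in> X"
  shows "\<bar>e T z\<bar> \<le> 2 * D0 * exp (- T / 2)"
proof -
  define D where "D = (\<lambda>(t, z). exp (t / 2) * \<bar>e t z\<bar>)"
  define Q where "Q = Sup (D ` ({0..T} \<times> X))"
  have bdd: "bdd_above (D ` ({0..T} \<times> X))"
    using bounded by (intro bdd_aboveI2[where M="exp (T / 2) * M"]) (auto simp: D_def intro!: mult_mono)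
  have D_le_Q: "exp (t / 2) * \<bar>e t z\<bar> \<le> Q" if "t \<in> {0..T}" "z \<in> X" for t z
  proof -
    have "D (t, z) \<le> Q"
      unfolding Q_def using that by (intro cSup_upper[OF imageI bdd]) simp
    then show ?thesis by (simp add: D_def)
  qed
  have "Q \<ge> 0" using D_le_Q[of 0 z] T z by (simp add: order_trans[OF abs_ge_zero])
  have "D tz \<le> 2 * D0" if "tz \<in> {0..T} \<times> X" for tz
  proof (rule le_twice_of_le_half_Sup[OF _ bdd _ _ _ _ that, of "1/2"])
    fix sz assume "sz \<in> {0..T} \<times> X"
    then obtain t z where sz: "sz = (t, z)" "t \<in> {0..T}" "z \<in> X" by auto
    have "exp (t / 2) * \<bar>e t z\<bar> \<le> \<bar>e 0 z\<bar> + Q / 2"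
    proof (rule damped_ode_half_rate_bound[where k="\<lambda>\<tau>. k \<tau> z"])
      show "continuous_on {0..t} (\<lambda>\<tau>. e \<tau> z)"
        using cont[OF sz(3)] by (rule continuous_on_subset) auto
      fix \<tau> assume \<tau>: "0 < \<tau>" "\<tau> < t"
      show "((\<lambda>\<tau>. e \<tau> z) has_real_derivative - e \<tau> z + k \<tau> z) (at \<tau>)"
        using der[OF sz(3) \<tau>(1)] .
      have "\<bar>e \<tau> z'\<bar> \<le> Q * exp (- (1/2) * \<tau>)" if "z' \<in> X" for z'
      proof -
        have "exp (\<tau> / 2) * \<bar>e \<tau> z'\<bar> \<le> Q" using D_le_Q \<tau> sz(2) that by auto
        then show ?thesis by (simp add: exp_minus field_simps)
      qed
      from forcing[OF \<tau>(1) this sz(3)] show "\<bar>k \<tau> z\<bar> \<le> Q / 4 * exp (- (1/2) * \<tau>)"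
        by simp
    qed (use sz \<open>Q \<ge> 0\<close> in auto)
    then show "D sz \<le> D0 + 1/2 * Sup (D ` ({0..T} \<times> X))"
      using initial[OF sz(3)] sz(1) unfolding D_def Q_def by simp
  qed (use ne T in \<open>auto simp: D_def\<close>)
  then have "exp (T / 2) * \<bar>e T z\<bar> \<le> 2 * D0" using T z by (auto simp: D_def)
  then show ?thesis by (simp add: exp_minus field_simps)
qed

lemma exp_decay_witness:
  fixes X :: "real \<Rightarrow> ennreal"
  assumes "\<And>t. t \<ge> 0 \<Longrightarrow> X t \<le> ennreal (K * exp (- t / 2))"
  shows "\<exists>C>0. \<exists>lam>0. \<forall>t\<ge>0. X t \<le> ennreal (C * exp (- lam * t))"
proof -
  have "X t \<le> ennreal ((\<bar>K\<bar> + 1) * exp (- (1/2) * t))" if "t \<ge> 0" for t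
  proof -
    have "K * exp (- t / 2) \<le> (\<bar>K\<bar> + 1) * exp (- t / 2)"
      by (intro mult_right_mono) auto
    also have "\<dots> = (\<bar>K\<bar> + 1) * exp (- (1/2) * t)"
      by simp
    finally show ?thesis
      using assms[OF that] by (meson ennreal_leI order_trans)
  qed
  then show ?thesis
    by (intro exI[of _ "\<bar>K\<bar> + 1"] conjI exI[of "\<lambda>lam. 0 < lam \<and> _ lam" "1/2"]) auto
qed

lemma relative_exp_decay_witness:
  fixes X :: "real \<Rightarrow> ennreal"
  assumes K: "0 \<le> K" and D: "0 \<le> D" and R: "D > 0 \<Longrightarrow> 0 < R \<and> R < \<infinity>"
    and le: "\<And>t. t \<ge> 0 \<Longrightarrow> X t \<le> ennreal (K * D * exp (- t / 2))"
  shows "\<exists>C>0. \<exists>lam>0. \<forall>t\<ge>0. X t \<le> ennreal (C * exp (- lam * t)) * R"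
proof -
  obtain C where "C > 0" and C: "K * D \<le> C * enn2real R" and R_eq: "D > 0 \<Longrightarrow> R = ennreal (enn2real R)"
  proof (cases "D = 0")
    case True
    then show ?thesis using that[of 1] by simp
  next
    case False
    then have "0 < enn2real R" "R = ennreal (enn2real R)"
      using R D by (auto simp: enn2real_positive_iff less_top)
    then show ?thesis
      using that[of "K * D / enn2real R + 1"] K D by (simp add: field_simps add_pos_nonneg)
  qed
  have "X t \<le> ennreal (C * exp (- (1/2) * t)) * R" if "t \<ge> 0" for t
  proof (cases "D = 0")
    case False
    have "K * D * exp (- t / 2) \<le> C * enn2real R * exp (- t / 2)"
      using C by (intro mult_right_mono) auto
    also have "\<dots> = C * exp (- (1/2) * t) * enn2real R"
      by simp
    finally have "X t \<le> ennreal (C * exp (- (1/2) * t) * enn2real R)"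
      using le[OF that] by (meson ennreal_leI order_trans)
    also have "\<dots> = ennreal (C * exp (- (1/2) * t)) * R"
      using \<open>C > 0\<close> False D R_eq by (subst R_eq) (auto simp: ennreal_mult)
    finally show ?thesis .
  qed (use le[OF that] in simp)
  then show ?thesis
    using \<open>C > 0\<close> by (intro exI[of _ C] conjI exI[of "\<lambda>lam. 0 < lam \<and> _ lam" "1/2"]) auto
qed

section \<open>Integrals and L1 norms\<close>

lemma has_bochner_integral_power_mult_exp:
  fixes c :: real and k :: nat
  assumes c: "0 < c"
  shows "has_bochner_integral lborel (\<lambda>s. indicator {0<..} s *\<^sub>R (s ^ k * exp (- c * s))) (fact k / c ^ Suc k)"
proof (rule has_bochner_integral_nn_integral)
  show "(\<lambda>s. indicator {0<..} s *\<^sub>R (s ^ k * exp (- c * s))) \<in> borel_measurable lborel" by measurable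
  show "0 \<le> fact k / c ^ Suc k" using c by simp
  show "AE x in lborel. 0 \<le> indicator {0<..} x *\<^sub>R (x ^ k * exp (- c * x))"
    by (auto simp: indicator_def)
  have "ennreal (fact k / c ^ k) = (\<integral>\<^sup>+ x. ennreal (erlang_density 0 c x * x ^ k) \<partial>lborel)"
    using nn_integral_erlang_ith_moment[OF c, of 0 k] by simp
  also have "\<dots> = (\<integral>\<^sup>+ x. ennreal c * ennreal (indicator {0<..} x *\<^sub>R (x ^ k * exp (- c * x))) \<partial>lborel)"
    using AE_lborel_singleton[of 0]
    by (intro nn_integral_cong_AE, eventually_elim)
       (use c in \<open>auto simp: erlang_density_def indicator_def ennreal_mult[symmetric] mult_ac\<close>)
  also have "\<dots> = ennreal c * (\<integral>\<^sup>+ x. ennreal (indicator {0<..} x *\<^sub>R (x ^ k * exp (- c * x))) \<partial>lborel)"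
    by (rule nn_integral_cmult) simp
  finally have "ennreal c * (\<integral>\<^sup>+ x. ennreal (indicator {0<..} x *\<^sub>R (x ^ k * exp (- c * x))) \<partial>lborel)
      = ennreal c * ennreal (fact k / c ^ Suc k)"
    using c by (simp add: ennreal_mult[symmetric] field_simps)
  then show "(\<integral>\<^sup>+ x. ennreal (indicator {0<..} x *\<^sub>R (x ^ k * exp (- c * x))) \<partial>lborel) = ennreal (fact k / c ^ Suc k)"
    using c by (simp add: mult.commute[of "ennreal c"] mult_right_ennreal_cancel)
qed

lemma
  fixes c :: real
  assumes "0 < c"
  shows set_integrable_power_mult_exp: "set_integrable lborel {0<..} (\<lambda>s. s ^ k * exp (- c * s))"
    and set_integral_power_mult_exp: "(LINT s:{0<..}|lborel. s ^ k * exp (- c * s)) = fact k / c ^ Suc k"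
  using has_bochner_integral_power_mult_exp[OF assms, of k]
  unfolding has_bochner_integral_iff set_integrable_def set_lebesgue_integral_def by simp_all

lemma
  fixes c :: real
  assumes "0 < c"
  shows set_integrable_exp: "set_integrable lborel {0<..} (\<lambda>s. exp (- c * s))"
    and set_integral_exp: "(LINT s:{0<..}|lborel. exp (- c * s)) = 1 / c"
  using set_integrable_power_mult_exp[OF assms, of 0] set_integral_power_mult_exp[OF assms, of 0]
  by simp_all

lemma abs_set_integral_le:
  fixes f h :: "'b::euclidean_space \<Rightarrow> real"
  assumes "set_integrable lborel A f" "set_integrable lborel A h" "\<And>x. x \<in> A \<Longrightarrow> \<bar>f x\<bar> \<le> h x"
  shows "\<bar>LINT x:A|lborel. f x\<bar> \<le> (LINT x:A|lborel. h x)"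
proof -
  have "\<bar>LINT x:A|lborel. f x\<bar> \<le> (LINT x:A|lborel. \<bar>f x\<bar>)"
    using set_integral_norm_bound[OF assms(1)] by simp
  also have "\<dots> \<le> (LINT x:A|lborel. h x)"
    by (rule set_integral_mono[OF set_integrable_abs[OF assms(1)] assms(2) assms(3)])
  finally show ?thesis .
qed

lemma exp_minus_diff_le:
  fixes u v m :: real
  assumes "m \<le> u" "m \<le> v"
  shows "\<bar>exp (- u) - exp (- v)\<bar> \<le> exp (- m) * \<bar>u - v\<bar>"
proof -
  have ordered: "exp (- u) - exp (- v) \<le> exp (- m) * (v - u)" if "m \<le> u" "u \<le> v" for u v
  proof -
    have "exp (- u) - exp (- v) = exp (- u) * (1 - exp (u - v))"
      by (simp add: algebra_simps exp_add[symmetric])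
    also have "\<dots> \<le> exp (- u) * (v - u)"
      using exp_ge_add_one_self[of "u - v"] by (intro mult_left_mono) (linarith, simp)
    also have "\<dots> \<le> exp (- m) * (v - u)"
      using that by (intro mult_right_mono) auto
    finally show ?thesis .
  qed
  show ?thesis
    using ordered[OF assms(1), of v] ordered[OF assms(2), of u] by (cases "u \<le> v") (auto simp: abs_if)
qed

lemma L1_s_le_set_integral:
  assumes "set_integrable lborel {0<..} h" and le: "\<And>s. s > 0 \<Longrightarrow> \<bar>f s\<bar> \<le> h s"
  shows "L1_s f \<le> ennreal (LINT s:{0<..}|lborel. h s)"
proof -
  have "L1_s f \<le> (\<integral>\<^sup>+ s. ennreal (indicator {0<..} s * h s) \<partial>lborel)"
    unfolding L1_s_def
    by (rule nn_integral_mono) (use le in \<open>auto simp: indicator_def intro: ennreal_leI\<close>)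
  also have "\<dots> = ennreal (LINT s:{0<..}|lborel. h s)"
    using assms le unfolding set_integrable_def set_lebesgue_integral_def
    by (subst nn_integral_eq_integral)
       (auto simp: indicator_def intro: order_trans[OF abs_ge_zero])
  finally show ?thesis .
qed

lemma L1_s_cong: "(\<And>s. s > 0 \<Longrightarrow> f s = h s) \<Longrightarrow> L1_s f = L1_s h"
  unfolding L1_s_def by (intro nn_integral_cong) (auto simp: indicator_def)

lemma abs_set_integral_le_L1_s:
  assumes "set_integrable lborel {0<..} f"
  shows "ennreal \<bar>LINT s:{0<..}|lborel. f s\<bar> \<le> L1_s f"
proof -
  have "ennreal \<bar>LINT s:{0<..}|lborel. f s\<bar> \<le> ennreal (LINT s:{0<..}|lborel. \<bar>f s\<bar>)"
    using set_integral_norm_bound[OF assms] by (intro ennreal_leI) simp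
  also have "\<dots> = L1_s f"
    using set_integrable_abs[OF assms] unfolding L1_s_def set_integrable_def set_lebesgue_integral_def
    by (subst nn_integral_eq_integral[symmetric]) (auto intro!: nn_integral_cong simp: indicator_def)
  finally show ?thesis .
qed

lemma L1_x_le:
  assumes "\<Omega> \<in> sets lborel" and "\<And>x. x \<in> \<Omega> \<Longrightarrow> \<bar>f x\<bar> \<le> c"
  shows "L1_x \<Omega> f \<le> ennreal c * emeasure lborel \<Omega>"
proof -
  have "L1_x \<Omega> f \<le> (\<integral>\<^sup>+ x. ennreal c * indicator \<Omega> x \<partial>lborel)"
    unfolding L1_x_def
    by (rule nn_integral_mono) (use assms(2) in \<open>auto simp: indicator_def intro: ennreal_leI\<close>)
  also have "\<dots> = ennreal c * emeasure lborel \<Omega>" by (rule nn_integral_cmult_indicator[OF assms(1)])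
  finally show ?thesis .
qed

lemma L1_xy_le:
  assumes "\<Omega> \<in> sets lborel" and "\<And>x y. x \<in> \<Omega> \<Longrightarrow> y \<in> \<Omega> \<Longrightarrow> \<bar>f x y\<bar> \<le> c"
  shows "L1_xy \<Omega> f \<le> ennreal c * emeasure lborel \<Omega> * emeasure lborel \<Omega>"
proof -
  have "L1_xy \<Omega> f \<le> (\<integral>\<^sup>+ x. (ennreal c * emeasure lborel \<Omega>) * indicator \<Omega> x \<partial>lborel)"
    unfolding L1_xy_def
    by (rule nn_integral_mono) (use L1_x_le[OF assms(1)] assms(2) in \<open>auto simp: indicator_def\<close>)
  also have "\<dots> = ennreal c * emeasure lborel \<Omega> * emeasure lborel \<Omega>"
    by (rule nn_integral_cmult_indicator[OF assms(1)])
  finally show ?thesis .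
qed

lemma L1_sx_le:
  assumes "\<Omega> \<in> sets lborel" and "\<And>x. x \<in> \<Omega> \<Longrightarrow> L1_s (\<lambda>s. f s x) \<le> ennreal c"
  shows "L1_sx \<Omega> f \<le> ennreal c * emeasure lborel \<Omega>"
proof -
  have "L1_sx \<Omega> f \<le> (\<integral>\<^sup>+ x. ennreal c * indicator \<Omega> x \<partial>lborel)"
    unfolding L1_sx_def
    by (rule nn_integral_mono) (use assms(2) in \<open>auto simp: indicator_def\<close>)
  also have "\<dots> = ennreal c * emeasure lborel \<Omega>" by (rule nn_integral_cmult_indicator[OF assms(1)])
  finally show ?thesis .
qed

lemma L1_xy_pos_of_cball:
  fixes \<Omega> :: "'a::euclidean_space set"
  assumes le: "\<And>x y. x \<in> cball x0 r \<Longrightarrow> y \<in> cball y0 r \<Longrightarrow> x \<in> \<Omega> \<and> y \<in> \<Omega> \<and> c \<le> \<bar>f x y\<bar>"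
    and r: "r > 0" and c: "c > 0"
  shows "L1_xy \<Omega> f > 0"
proof -
  have ball_pos: "emeasure lborel (cball z r) > 0" for z :: 'a
    unfolding emeasure_cball[OF less_imp_le[OF r]] using r by (simp add: ennreal_zero_less_mult_iff)
  have inner: "ennreal c * emeasure lborel (cball y0 r) \<le> L1_x \<Omega> (f x)" if "x \<in> cball x0 r" for x
  proof -
    have "ennreal c * emeasure lborel (cball y0 r) = (\<integral>\<^sup>+ y. ennreal c * indicator (cball y0 r) y \<partial>lborel)"
      by (rule nn_integral_cmult_indicator[symmetric]) simp
    also have "\<dots> \<le> L1_x \<Omega> (f x)"
      unfolding L1_x_def by (rule nn_integral_mono) (use le[OF that] in \<open>auto simp: indicator_def\<close>)
    finally show ?thesis .
  qed
  have "0 < ennreal c * emeasure lborel (cball y0 r) * emeasure lborel (cball x0 r)"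
    using ball_pos c by (simp add: ennreal_zero_less_mult_iff)
  also have "\<dots> = (\<integral>\<^sup>+ x. ennreal c * emeasure lborel (cball y0 r) * indicator (cball x0 r) x \<partial>lborel)"
    by (rule nn_integral_cmult_indicator[symmetric]) simp
  also have "\<dots> \<le> L1_xy \<Omega> f"
    unfolding L1_xy_def
  proof (rule nn_integral_mono)
    fix x
    show "ennreal c * emeasure lborel (cball y0 r) * indicator (cball x0 r) x \<le> indicator \<Omega> x * L1_x \<Omega> (f x)"
      using inner[of x] le[of x y0] r by (cases "x \<in> cball x0 r") (auto simp: indicator_def)
  qed
  finally show ?thesis .
qed

lemma L1_xy_pos_of_continuous:
  fixes \<Omega> :: "'a::euclidean_space set"
  assumes "open \<Omega>" and cont: "continuous_on (\<Omega> \<times> \<Omega>) (\<lambda>(x, y). f x y)"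
    and x0: "x0 \<in> \<Omega>" and y0: "y0 \<in> \<Omega>" and nonzero: "f x0 y0 \<noteq> 0"
  shows "L1_xy \<Omega> f > 0"
proof -
  define c where "c = \<bar>f x0 y0\<bar> / 2"
  have "c > 0" using nonzero by (simp add: c_def)
  obtain d where d: "d > 0" "\<And>z. z \<in> \<Omega> \<times> \<Omega> \<Longrightarrow> dist z (x0, y0) < d \<Longrightarrow> dist ((\<lambda>(x, y). f x y) z) (f x0 y0) < c"
    using cont x0 y0 \<open>c > 0\<close> unfolding continuous_on_iff by fastforce
  obtain r where r: "r > 0" "ball (x0, y0) r \<subseteq> \<Omega> \<times> \<Omega>"
    using \<open>open \<Omega>\<close> x0 y0 open_Times open_contains_ball by blast
  define \<rho> where "\<rho> = min d r / 4"
  show ?thesis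
  proof (rule L1_xy_pos_of_cball[of x0 \<rho> y0])
    fix x y assume "x \<in> cball x0 \<rho>" "y \<in> cball y0 \<rho>"
    then have "dist (x, y) (x0, y0) \<le> \<rho> + \<rho>"
      using norm_Pair_le[of "x - x0" "y - y0"] by (simp add: dist_norm dist_commute norm_minus_commute)
    also have "\<dots> < min d r" using d(1) r(1) unfolding \<rho>_def by linarith
    finally have close: "dist (x, y) (x0, y0) < min d r" .
    then have "(x, y) \<in> ball (x0, y0) r" by (simp add: dist_commute)
    then have xy: "(x, y) \<in> \<Omega> \<times> \<Omega>" using r(2) by blast
    then have "\<bar>f x y - f x0 y0\<bar> < c" using d(2)[of "(x, y)"] close by (simp add: dist_real_def)
    moreover have "\<bar>f x0 y0\<bar> - \<bar>f x y\<bar> \<le> \<bar>f x y - f x0 y0\<bar>"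
      by (metis abs_minus_commute abs_triangle_ineq2)
    ultimately show "x \<in> \<Omega> \<and> y \<in> \<Omega> \<and> c \<le> \<bar>f x y\<bar>" using xy unfolding c_def by auto
  qed (use d r \<open>c > 0\<close> in \<open>auto simp: \<rho>_def\<close>)
qed

section \<open>Survival functions of the age dynamics\<close>

lemma mem_closed_of_continuous_on_atLeast:
  fixes h :: "real \<Rightarrow> 'b::topological_space"
  assumes "continuous_on {0..} h" "closed K" "\<And>\<tau>. \<tau> > 0 \<Longrightarrow> h \<tau> \<in> K" "\<tau> \<ge> 0"
  shows "h \<tau> \<in> K"
proof -
  have closure: "closure {0<..} = ({0..} :: real set)" by simp
  have "h ` closure {0<..} \<subseteq> K"
    by (rule image_closure_subset) (use assms closure in auto)
  then show ?thesis using assms(4) closure by auto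
qed

locale bounded_rate =
  fixes p :: "real \<Rightarrow> real \<Rightarrow> real" and p_low p_inf :: real
  assumes W1inf: "W1inf p"
    and rate_bounds: "\<forall>s>0. \<forall>S'. p_low \<le> p s S' \<and> p s S' \<le> p_inf"
    and p_low_pos: "0 < p_low"
begin

lemma p_inf_pos: "0 < p_inf"
  using rate_bounds p_low_pos by (meson less_le_trans zero_less_one)

lemma continuous_extension_exists: "\<exists>h. continuous_on {0..} h \<and> (\<forall>\<tau>>0. h \<tau> = p \<tau> \<sigma>)"
proof -
  obtain L where L: "L-lipschitz_on ({0<..} \<times> UNIV) (\<lambda>(s, S). p s S)"
    using W1inf unfolding W1inf_def by blast
  have "L-lipschitz_on {0<..} (\<lambda>\<tau>. p \<tau> \<sigma>)"
  proof (rule lipschitz_onI)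
    show "0 \<le> L" using L lipschitz_on_nonneg by blast
    fix x y :: real assume "x \<in> {0<..}" "y \<in> {0<..}"
    then have "dist ((\<lambda>(s, S). p s S) (x, \<sigma>)) ((\<lambda>(s, S). p s S) (y, \<sigma>)) \<le> L * dist (x, \<sigma>) (y, \<sigma>)"
      by (intro lipschitz_onD[OF L]) auto
    then show "dist (p x \<sigma>) (p y \<sigma>) \<le> L * dist x y"
      by (simp add: dist_Pair_Pair)
  qed
  then have "uniformly_continuous_on {0<..} (\<lambda>\<tau>. p \<tau> \<sigma>)"
    by (rule lipschitz_on_uniformly_continuous)
  then obtain h where "uniformly_continuous_on (closure {0<..}) h" "\<And>x. x \<in> {0<..} \<Longrightarrow> p x \<sigma> = h x"
    by (rule uniformly_continuous_on_extension_on_closure) blast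
  then show ?thesis
    by (intro exI[of _ h]) (auto intro: uniformly_continuous_imp_continuous)
qed

text \<open>The value of \<open>p\<close> at age \<open>0\<close> is not constrained by the hypotheses; the rate is
  replaced by its continuous extension to the closed half-line.\<close>
definition rate_ext :: "real \<Rightarrow> real \<Rightarrow> real" where
  "rate_ext \<sigma> = (SOME h. continuous_on {0..} h \<and> (\<forall>\<tau>>0. h \<tau> = p \<tau> \<sigma>))"

lemma continuous_on_rate_ext: "continuous_on {0..} (rate_ext \<sigma>)"
  and rate_ext_eq: "\<tau> > 0 \<Longrightarrow> rate_ext \<sigma> \<tau> = p \<tau> \<sigma>"
  using someI_ex[OF continuous_extension_exists] unfolding rate_ext_def by auto

lemma continuous_on_interval_rate_ext: "continuous_on {0..s} (rate_ext \<sigma>)"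
  by (rule continuous_on_subset[OF continuous_on_rate_ext]) auto

lemma rate_ext_bounds:
  assumes "\<tau> \<ge> 0"
  shows "p_low \<le> rate_ext \<sigma> \<tau> \<and> rate_ext \<sigma> \<tau> \<le> p_inf"
  using mem_closed_of_continuous_on_atLeast[OF continuous_on_rate_ext, of "{p_low..p_inf}"]
    rate_ext_eq rate_bounds assms by auto

lemma rate_ext_lipschitz:
  assumes "dS_bound p \<delta>" and "\<tau> \<ge> 0"
  shows "\<bar>rate_ext a \<tau> - rate_ext b \<tau>\<bar> \<le> \<delta> * \<bar>a - b\<bar>"
proof -
  have "(\<lambda>t. rate_ext a t - rate_ext b t) \<tau> \<in> {- (\<delta> * \<bar>a - b\<bar>) .. \<delta> * \<bar>a - b\<bar>}"
  proof (rule mem_closed_of_continuous_on_atLeast[OF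
        continuous_on_diff[OF continuous_on_rate_ext continuous_on_rate_ext]])
    fix t :: real assume "t > 0"
    moreover from this have "\<bar>p t a - p t b\<bar> \<le> \<delta> * \<bar>a - b\<bar>"
      using assms(1) unfolding dS_bound_def by blast
    ultimately show "rate_ext a t - rate_ext b t \<in> {- (\<delta> * \<bar>a - b\<bar>) .. \<delta> * \<bar>a - b\<bar>}"
      using rate_ext_eq by (auto simp: abs_le_iff)
  qed (use assms(2) in auto)
  then show ?thesis by (simp add: abs_le_iff)
qed

definition cumulative_rate :: "real \<Rightarrow> real \<Rightarrow> real" where
  "cumulative_rate \<sigma> s = integral {0..s} (rate_ext \<sigma>)"

lemma cumulative_rate_0 [simp]: "cumulative_rate \<sigma> 0 = 0"
  by (simp add: cumulative_rate_def)

lemma cumulative_rate_has_derivative_within: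
  assumes "s \<ge> 0"
  shows "(cumulative_rate \<sigma> has_real_derivative rate_ext \<sigma> s) (at s within {0..s + 1})"
  unfolding cumulative_rate_def
  by (rule integral_has_real_derivative[OF continuous_on_interval_rate_ext]) (use assms in auto)

lemma cumulative_rate_has_derivative:
  assumes "s > 0"
  shows "(cumulative_rate \<sigma> has_real_derivative p s \<sigma>) (at s)"
proof -
  have "at s within {0..s + 1} = at s"
    by (rule at_within_interior) (use assms in auto)
  then show ?thesis
    using cumulative_rate_has_derivative_within[of s \<sigma>] assms rate_ext_eq by simp
qed

lemma continuous_on_cumulative_rate: "continuous_on {0..T} (cumulative_rate \<sigma>)"
  unfolding cumulative_rate_def
  by (rule DERIV_continuous_on, rule integral_has_real_derivative[OF continuous_on_interval_rate_ext]) auto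

lemma cumulative_rate_bounds:
  assumes "s \<ge> 0"
  shows "p_low * s \<le> cumulative_rate \<sigma> s \<and> cumulative_rate \<sigma> s \<le> p_inf * s"
proof -
  have "rate_ext \<sigma> integrable_on {0..s}"
    by (rule integrable_continuous_real[OF continuous_on_interval_rate_ext])
  then have "integral {0..s} (\<lambda>_. p_low) \<le> cumulative_rate \<sigma> s"
    and "cumulative_rate \<sigma> s \<le> integral {0..s} (\<lambda>_. p_inf)"
    unfolding cumulative_rate_def using rate_ext_bounds by (intro integral_le; auto)+
  then show ?thesis using assms by (simp add: mult.commute)
qed

lemma cumulative_rate_lipschitz:
  assumes "dS_bound p \<delta>" and "s \<ge> 0"
  shows "\<bar>cumulative_rate a s - cumulative_rate b s\<bar> \<le> \<delta> * \<bar>a - b\<bar> * s"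
proof -
  have "cumulative_rate a s - cumulative_rate b s = integral {0..s} (\<lambda>t. rate_ext a t - rate_ext b t)"
    unfolding cumulative_rate_def
    by (intro integral_diff[symmetric] integrable_continuous_real continuous_on_interval_rate_ext)
  also have "norm \<dots> \<le> \<delta> * \<bar>a - b\<bar> * (s - 0)"
    using assms rate_ext_lipschitz
    by (intro integral_bound continuous_on_diff continuous_on_interval_rate_ext) auto
  finally show ?thesis by simp
qed

definition survival :: "real \<Rightarrow> real \<Rightarrow> real" where
  "survival \<sigma> s = exp (- cumulative_rate \<sigma> s)"

definition mean_lifetime :: "real \<Rightarrow> real" where
  "mean_lifetime \<sigma> = (LINT s:{0<..}|lborel. survival \<sigma> s)"

definition activity :: "real \<Rightarrow> real" where
  "activity \<sigma> = 1 / mean_lifetime \<sigma>"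

lemma survival_bounds:
  assumes "s \<ge> 0"
  shows "exp (- p_inf * s) \<le> survival \<sigma> s \<and> survival \<sigma> s \<le> exp (- p_low * s)"
  using cumulative_rate_bounds[OF assms] by (simp add: survival_def)

lemma survival_lipschitz:
  assumes "dS_bound p \<delta>" and "s \<ge> 0"
  shows "\<bar>survival a s - survival b s\<bar> \<le> \<delta> * \<bar>a - b\<bar> * (s * exp (- p_low * s))"
proof -
  have "\<bar>survival a s - survival b s\<bar> \<le> exp (- (p_low * s)) * \<bar>cumulative_rate a s - cumulative_rate b s\<bar>"
    unfolding survival_def using cumulative_rate_bounds[OF assms(2)] by (intro exp_minus_diff_le) auto
  also have "\<dots> \<le> exp (- (p_low * s)) * (\<delta> * \<bar>a - b\<bar> * s)"
    by (intro mult_left_mono cumulative_rate_lipschitz[OF assms]) auto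
  finally show ?thesis by (simp add: mult_ac)
qed

lemma set_integrable_survival: "set_integrable lborel {0<..} (survival \<sigma>)"
proof (rule set_integrable_bound[OF set_integrable_exp[OF p_low_pos]])
  have "continuous_on {0<..} (cumulative_rate \<sigma>)"
    by (rule continuous_at_imp_continuous_on) (auto intro: DERIV_isCont cumulative_rate_has_derivative)
  then have "continuous_on {0<..} (survival \<sigma>)"
    unfolding survival_def by (intro continuous_intros)
  from borel_measurable_continuous_on_indicator[OF _ this]
  show "set_borel_measurable lborel {0<..} (survival \<sigma>)"
    unfolding set_borel_measurable_def by simp
  show "AE s in lborel. s \<in> {0<..} \<longrightarrow> norm (survival \<sigma> s) \<le> norm (exp (- p_low * s))"
    using survival_bounds by (auto simp: survival_def)
qed

lemma mean_lifetime_bounds: "1 / p_inf \<le> mean_lifetime \<sigma> \<and> mean_lifetime \<sigma> \<le> 1 / p_low"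
proof -
  have "(LINT s:{0<..}|lborel. exp (- p_inf * s)) \<le> mean_lifetime \<sigma>"
    unfolding mean_lifetime_def using survival_bounds
    by (intro set_integral_mono set_integrable_exp p_inf_pos set_integrable_survival) auto
  moreover have "mean_lifetime \<sigma> \<le> (LINT s:{0<..}|lborel. exp (- p_low * s))"
    unfolding mean_lifetime_def using survival_bounds
    by (intro set_integral_mono set_integrable_exp p_low_pos set_integrable_survival) auto
  ultimately show ?thesis using set_integral_exp[OF p_inf_pos] set_integral_exp[OF p_low_pos] by simp
qed

lemma mean_lifetime_pos: "0 < mean_lifetime \<sigma>"
  using mean_lifetime_bounds[of \<sigma>] p_inf_pos by (smt (verit) divide_pos_pos)

lemma mean_lifetime_lipschitz:
  assumes "dS_bound p \<delta>"
  shows "\<bar>mean_lifetime a - mean_lifetime b\<bar> \<le> \<delta> * \<bar>a - b\<bar> / p_low ^ 2"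
proof -
  have "\<bar>mean_lifetime a - mean_lifetime b\<bar> = \<bar>LINT s:{0<..}|lborel. survival a s - survival b s\<bar>"
    unfolding mean_lifetime_def by (simp add: set_integral_diff(2)[OF set_integrable_survival set_integrable_survival])
  also have "\<dots> \<le> (LINT s:{0<..}|lborel. \<delta> * \<bar>a - b\<bar> * (s ^ 1 * exp (- p_low * s)))"
    using survival_lipschitz[OF assms]
    by (intro abs_set_integral_le set_integral_diff(1) set_integrable_survival set_integrable_mult_right
          set_integrable_power_mult_exp[OF p_low_pos]) auto
  also have "\<dots> = \<delta> * \<bar>a - b\<bar> / p_low ^ 2"
    using set_integral_power_mult_exp[OF p_low_pos, of 1] by (simp add: power2_eq_square)
  finally show ?thesis .
qed

lemma activity_bounds: "p_low \<le> activity \<sigma> \<and> activity \<sigma> \<le> p_inf"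
  using mean_lifetime_bounds[of \<sigma>] mean_lifetime_pos[of \<sigma>] p_low_pos p_inf_pos
  by (auto simp: activity_def field_simps)

lemma activity_lipschitz:
  assumes "dS_bound p \<delta>"
  shows "\<bar>activity a - activity b\<bar> \<le> (p_inf / p_low) ^ 2 * \<delta> * \<bar>a - b\<bar>"
proof -
  have pos: "0 < mean_lifetime a" "0 < mean_lifetime b" by (rule mean_lifetime_pos)+
  have lifetime_product: "1 / (mean_lifetime a * mean_lifetime b) \<le> p_inf ^ 2"
  proof -
    have "1 / p_inf * (1 / p_inf) \<le> mean_lifetime a * mean_lifetime b"
      using mean_lifetime_bounds p_inf_pos pos by (intro mult_mono) auto
    then show ?thesis using pos p_inf_pos by (simp add: field_simps power2_eq_square)
  qed
  have "\<bar>activity a - activity b\<bar>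
      = \<bar>mean_lifetime a - mean_lifetime b\<bar> * (1 / (mean_lifetime a * mean_lifetime b))"
    using pos by (simp add: activity_def abs_minus_commute diff_frac_eq abs_div)
  also have "\<dots> \<le> \<bar>mean_lifetime a - mean_lifetime b\<bar> * p_inf ^ 2"
    using lifetime_product by (rule mult_left_mono) simp
  also have "\<dots> \<le> \<delta> * \<bar>a - b\<bar> / p_low ^ 2 * p_inf ^ 2"
    by (intro mult_right_mono mean_lifetime_lipschitz[OF assms]) auto
  finally show ?thesis by (simp add: power_divide mult_ac)
qed

lemma L1_s_scaled_survival_diff:
  assumes "dS_bound p \<delta>"
  shows "L1_s (\<lambda>s. a * survival \<sigma> s - b * survival \<tau> s)
    \<le> ennreal (\<bar>a - b\<bar> / p_low + \<bar>b\<bar> * \<delta> * \<bar>\<sigma> - \<tau>\<bar> / p_low ^ 2)"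
proof -
  define h where "h s = \<bar>a - b\<bar> * (s ^ 0 * exp (- p_low * s)) + \<bar>b\<bar> * \<delta> * \<bar>\<sigma> - \<tau>\<bar> * (s ^ 1 * exp (- p_low * s))"
    for s
  have moment_integrable: "set_integrable lborel {0<..} (\<lambda>s. c * (s ^ k * exp (- p_low * s)))" for c k
    by (intro set_integrable_mult_right set_integrable_power_mult_exp p_low_pos)
  have "L1_s (\<lambda>s. a * survival \<sigma> s - b * survival \<tau> s) \<le> ennreal (LINT s:{0<..}|lborel. h s)"
  proof (rule L1_s_le_set_integral)
    show "set_integrable lborel {0<..} h"
      unfolding h_def by (intro set_integral_add moment_integrable)
    fix s :: real assume "s > 0"
    then have "0 \<le> survival \<sigma> s" "survival \<sigma> s \<le> exp (- p_low * s)"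
      using survival_bounds[of s \<sigma>] exp_ge_zero[of "- p_inf * s"] by linarith+
    then have "\<bar>(a - b) * survival \<sigma> s\<bar> \<le> \<bar>a - b\<bar> * exp (- p_low * s)"
      by (simp add: abs_mult mult_left_mono)
    moreover have "\<bar>b * (survival \<sigma> s - survival \<tau> s)\<bar> \<le> \<bar>b\<bar> * (\<delta> * \<bar>\<sigma> - \<tau>\<bar> * (s * exp (- p_low * s)))"
      using survival_lipschitz[OF assms, of s \<sigma> \<tau>] \<open>s > 0\<close> by (simp add: abs_mult mult_left_mono)
    moreover have "a * survival \<sigma> s - b * survival \<tau> s
        = (a - b) * survival \<sigma> s + b * (survival \<sigma> s - survival \<tau> s)"
      by (simp add: algebra_simps)
    ultimately show "\<bar>a * survival \<sigma> s - b * survival \<tau> s\<bar> \<le> h s"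
      unfolding h_def using abs_triangle_ineq[of "(a - b) * survival \<sigma> s" "b * (survival \<sigma> s - survival \<tau> s)"]
      by (simp add: mult_ac)
  qed
  also have "(LINT s:{0<..}|lborel. h s) = \<bar>a - b\<bar> / p_low + \<bar>b\<bar> * \<delta> * \<bar>\<sigma> - \<tau>\<bar> / p_low ^ 2"
    unfolding h_def set_integral_add(2)[OF moment_integrable moment_integrable] set_integral_mult_right
      set_integral_power_mult_exp[OF p_low_pos]
    by (simp add: power2_eq_square)
  finally show ?thesis .
qed

lemma age_profile_eq:
  assumes cont: "continuous_on {0..} m"
    and der: "\<forall>s>0. (m has_real_derivative (- p s \<sigma> * m s)) (at s)"
    and s: "s \<ge> 0"
  shows "m s = m 0 * survival \<sigma> s"
proof -
  define h where "h s = m s * exp (cumulative_rate \<sigma> s)" for s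
  have h_deriv: "(h has_real_derivative 0) (at x)" if "0 < x" for x
    unfolding h_def
    using DERIV_mult[OF der[rule_format, OF that]
        DERIV_chain2[OF DERIV_exp cumulative_rate_has_derivative[OF that]]]
    by (rule DERIV_cong) (simp add: algebra_simps)
  have "h s = h 0"
  proof (cases "s = 0")
    case False
    show ?thesis
    proof (rule DERIV_isconst_end[of 0 s h])
      show "0 < s" using s False by simp
      have "continuous_on {0..s} m" using cont by (rule continuous_on_subset) auto
      then show "continuous_on {0..s} h"
        unfolding h_def by (intro continuous_intros continuous_on_cumulative_rate)
    qed (rule h_deriv)
  qed simp
  then have "m s * exp (cumulative_rate \<sigma> s) = m 0" by (simp add: h_def)
  then show ?thesis by (simp add: survival_def exp_minus eq_divide_eq flip: divide_inverse)
qed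

lemma age_profile_boundary:
  assumes "continuous_on {0..} m"
    and "\<forall>s>0. (m has_real_derivative (- p s \<sigma> * m s)) (at s)"
    and mass: "(LINT s:{0<..}|lborel. m s) = a"
  shows "m 0 = a * activity \<sigma>"
proof -
  have "a = (LINT s:{0<..}|lborel. m 0 * survival \<sigma> s)"
    unfolding mass[symmetric]
    by (rule set_lebesgue_integral_cong) (auto intro: age_profile_eq[OF assms(1,2)])
  also have "\<dots> = m 0 * mean_lifetime \<sigma>" by (simp add: mean_lifetime_def)
  finally show ?thesis
    using mean_lifetime_pos[of \<sigma>] by (simp add: activity_def)
qed

end

section \<open>Static estimates for the network equation\<close>

lemma abs_set_integral_le_density:
  fixes \<Omega> :: "'a::euclidean_space set" and f g :: "'a \<Rightarrow> real"
  assumes "set_integrable lborel \<Omega> f" "set_integrable lborel \<Omega> g" "(LINT x:\<Omega>|lborel. g x) = 1"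
    and "\<And>y. y \<in> \<Omega> \<Longrightarrow> \<bar>f y\<bar> \<le> K * g y"
  shows "\<bar>LINT y:\<Omega>|lborel. f y\<bar> \<le> K"
proof -
  have "\<bar>LINT y:\<Omega>|lborel. f y\<bar> \<le> (LINT y:\<Omega>|lborel. K * g y)"
    using assms(2) by (intro abs_set_integral_le[OF assms(1) _ assms(4)] set_integrable_mult_right)
  also have "\<dots> = K" using assms(3) by simp
  finally show ?thesis .
qed

lemma abs_activity_le:
  fixes g Fm :: real and F :: "real \<Rightarrow> real"
  assumes "0 \<le> g" "\<And>v. 0 \<le> F v \<and> F v \<le> Fm"
  shows "\<bar>g * F v\<bar> \<le> Fm * g"
proof -
  have "g * F v \<le> g * Fm" using assms by (intro mult_left_mono) auto
  then show ?thesis using assms by (simp add: abs_mult mult.commute)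
qed

lemma abs_set_integral_mult_le:
  fixes \<Omega> :: "'a::euclidean_space set" and w N g :: "'a \<Rightarrow> real"
  assumes "set_integrable lborel \<Omega> (\<lambda>y. w y * N y)" "set_integrable lborel \<Omega> g"
    "(LINT x:\<Omega>|lborel. g x) = 1"
    and w_le: "\<And>y. y \<in> \<Omega> \<Longrightarrow> \<bar>w y\<bar> \<le> c" and N_le: "\<And>y. y \<in> \<Omega> \<Longrightarrow> \<bar>N y\<bar> \<le> K * g y"
  shows "\<bar>LINT y:\<Omega>|lborel. w y * N y\<bar> \<le> c * K"
proof (rule abs_set_integral_le_density[OF assms(1-3)])
  fix y assume y: "y \<in> \<Omega>"
  have "0 \<le> c" using w_le[OF y] by linarith
  then show "\<bar>w y * N y\<bar> \<le> c * K * g y"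
    using mult_mono[OF w_le[OF y] N_le[OF y]] by (simp add: abs_mult mult.assoc)
qed

lemma abs_weighted_activity_diff_le:
  fixes F :: "real \<Rightarrow> real"
  assumes g: "0 \<le> g" and F_bounds: "\<And>v. 0 \<le> F v \<and> F v \<le> Fm"
    and F_lip: "\<And>u v. \<bar>F u - F v\<bar> \<le> L * \<bar>u - v\<bar>" and L: "0 \<le> L"
    and "\<bar>w1 - w2\<bar> \<le> d" "\<bar>w2\<bar> \<le> c" "\<bar>S1 - S2\<bar> \<le> E"
  shows "\<bar>w1 * (g * F S1) - w2 * (g * F S2)\<bar> \<le> (d * Fm + c * L * E) * g"
proof -
  have "\<bar>g * F S1 - g * F S2\<bar> \<le> g * (L * E)"
    using g F_lip[of S1 S2] assms(7) L
    by (simp add: abs_mult flip: right_diff_distrib) (meson mult_left_mono order_trans)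
  then have "\<bar>w2\<bar> * \<bar>g * F S1 - g * F S2\<bar> \<le> c * (g * (L * E))"
    using assms(6) by (intro mult_mono) auto
  moreover have "\<bar>w1 - w2\<bar> * \<bar>g * F S1\<bar> \<le> d * (Fm * g)"
    using assms(5) abs_activity_le[OF g F_bounds] by (intro mult_mono) auto
  moreover have "w1 * (g * F S1) - w2 * (g * F S2) = (w1 - w2) * (g * F S1) + w2 * (g * F S1 - g * F S2)"
    by (simp add: algebra_simps)
  then have "\<bar>w1 * (g * F S1) - w2 * (g * F S2)\<bar> \<le> \<bar>w1 - w2\<bar> * \<bar>g * F S1\<bar> + \<bar>w2\<bar> * \<bar>g * F S1 - g * F S2\<bar>"
    by (metis abs_mult abs_triangle_ineq)
  ultimately show ?thesis by (simp add: algebra_simps)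
qed

text \<open>The map \<open>S \<mapsto> \<integral> w(., y) g(y) F(S(y)) dy + I\<close> is a contraction in the sup norm when
  \<open>sup \<bar>w\<bar> * Lip F \<le> 1/2\<close>.\<close>
lemma input_diff_le:
  fixes \<Omega> :: "'a::euclidean_space set" and g I S1 S2 N1 N2 :: "'a \<Rightarrow> real"
    and w1 w2 :: "'a \<Rightarrow> 'a \<Rightarrow> real" and F :: "real \<Rightarrow> real"
  assumes ne: "\<Omega> \<noteq> {}"
    and S1: "\<And>x. x \<in> \<Omega> \<Longrightarrow> set_integrable lborel \<Omega> (\<lambda>y. w1 x y * N1 y) \<and> S1 x = (LINT y:\<Omega>|lborel. w1 x y * N1 y) + I x"
    and S2: "\<And>x. x \<in> \<Omega> \<Longrightarrow> set_integrable lborel \<Omega> (\<lambda>y. w2 x y * N2 y) \<and> S2 x = (LINT y:\<Omega>|lborel. w2 x y * N2 y) + I x"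
    and N1: "\<And>x. x \<in> \<Omega> \<Longrightarrow> N1 x = g x * F (S1 x)"
    and N2: "\<And>x. x \<in> \<Omega> \<Longrightarrow> N2 x = g x * F (S2 x)"
    and g_nonneg: "\<And>x. x \<in> \<Omega> \<Longrightarrow> 0 \<le> g x" and g_int: "set_integrable lborel \<Omega> g"
    and g_mass: "(LINT x:\<Omega>|lborel. g x) = 1"
    and F_bounds: "\<And>v. 0 \<le> F v \<and> F v \<le> Fm"
    and F_lip: "\<And>u v. \<bar>F u - F v\<bar> \<le> L * \<bar>u - v\<bar>" and L: "0 \<le> L"
    and w1_le: "\<And>x y. x \<in> \<Omega> \<Longrightarrow> y \<in> \<Omega> \<Longrightarrow> \<bar>w1 x y\<bar> \<le> c1"
    and w2_le: "\<And>x y. x \<in> \<Omega> \<Longrightarrow> y \<in> \<Omega> \<Longrightarrow> \<bar>w2 x y\<bar> \<le> c2"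
    and w_diff: "\<And>x y. x \<in> \<Omega> \<Longrightarrow> y \<in> \<Omega> \<Longrightarrow> \<bar>w1 x y - w2 x y\<bar> \<le> d"
    and small: "c2 * L \<le> 1/2"
    and x: "x \<in> \<Omega>"
  shows "\<bar>S1 x - S2 x\<bar> \<le> 2 * (d * Fm)"
proof -
  have N_le: "\<bar>N1 y\<bar> \<le> Fm * g y" "\<bar>N2 y\<bar> \<le> Fm * g y" if "y \<in> \<Omega>" for y
    using N1[OF that] N2[OF that] abs_activity_le[OF g_nonneg[OF that] F_bounds] by auto
  have c2: "0 \<le> c2" using w2_le ne order_trans[OF abs_ge_zero] by blast
  define D where "D x = \<bar>S1 x - S2 x\<bar>" for x
  have bdd: "bdd_above (D ` \<Omega>)"
  proof (rule bdd_aboveI2)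
    fix x assume x: "x \<in> \<Omega>"
    have "\<bar>S1 x - I x\<bar> \<le> c1 * Fm" "\<bar>S2 x - I x\<bar> \<le> c2 * Fm"
      using abs_set_integral_mult_le[OF conjunct1[OF S1[OF x]] g_int g_mass w1_le[OF x] N_le(1)]
        abs_set_integral_mult_le[OF conjunct1[OF S2[OF x]] g_int g_mass w2_le[OF x] N_le(2)] S1[OF x] S2[OF x]
      by auto
    then show "D x \<le> c1 * Fm + c2 * Fm" unfolding D_def by linarith
  qed
  show ?thesis
    unfolding D_def[symmetric]
  proof (rule le_twice_of_le_half_Sup[OF ne bdd _ _ small _ x])
    fix x assume x: "x \<in> \<Omega>"
    have "\<bar>w1 x y * N1 y - w2 x y * N2 y\<bar> \<le> (d * Fm + c2 * L * Sup (D ` \<Omega>)) * g y" if y: "y \<in> \<Omega>" for y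
      unfolding N1[OF y] N2[OF y]
      using g_nonneg[OF y] F_bounds F_lip L w_diff[OF x y] w2_le[OF x y] cSup_upper[OF imageI[OF y] bdd]
      by (intro abs_weighted_activity_diff_le) (auto simp: D_def)
    then have "\<bar>LINT y:\<Omega>|lborel. w1 x y * N1 y - w2 x y * N2 y\<bar> \<le> d * Fm + c2 * L * Sup (D ` \<Omega>)"
      using S1[OF x] S2[OF x] by (intro abs_set_integral_le_density[OF _ g_int g_mass] set_integral_diff) auto
    then show "D x \<le> d * Fm + c2 * L * Sup (D ` \<Omega>)"
      using S1[OF x] S2[OF x] by (simp add: D_def)
  qed (use c2 L in \<open>auto simp: D_def\<close>)
qed

lemma stationary_activity_diff_le:
  fixes \<Omega> :: "'a::euclidean_space set" and g I Ns Ss :: "'a \<Rightarrow> real"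
    and ws :: "'a \<Rightarrow> 'a \<Rightarrow> real" and F :: "real \<Rightarrow> real" and G :: "real \<times> real \<Rightarrow> real"
  assumes x: "x \<in> \<Omega>" and x': "x' \<in> \<Omega>"
    and Ss: "\<And>x. x \<in> \<Omega> \<Longrightarrow> set_integrable lborel \<Omega> (\<lambda>y. ws x y * Ns y) \<and> Ss x = (LINT y:\<Omega>|lborel. ws x y * Ns y) + I x"
    and Ns: "\<And>x. x \<in> \<Omega> \<Longrightarrow> Ns x = g x * F (Ss x)"
    and ws: "\<And>x y. x \<in> \<Omega> \<Longrightarrow> y \<in> \<Omega> \<Longrightarrow> ws x y = \<gamma> * G (Ns x, Ns y)"
    and G_lip: "\<And>a b c d. \<bar>G (a, b) - G (c, d)\<bar> \<le> \<bar>a - c\<bar> + \<bar>b - d\<bar>"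
    and g_nonneg: "\<And>x. x \<in> \<Omega> \<Longrightarrow> 0 \<le> g x" and g_le: "\<And>x. x \<in> \<Omega> \<Longrightarrow> g x \<le> B"
    and g_int: "set_integrable lborel \<Omega> g" and g_mass: "(LINT x:\<Omega>|lborel. g x) = 1"
    and F_bounds: "\<And>v. 0 \<le> F v \<and> F v \<le> Fm"
    and F_lip: "\<And>u v. \<bar>F u - F v\<bar> \<le> L * \<bar>u - v\<bar>" and L: "0 \<le> L"
    and \<gamma>: "0 \<le> \<gamma>" and small: "B * L * \<gamma> * Fm \<le> 1/2" "B * L \<le> 1"
  shows "\<bar>Ns x - Ns x'\<bar> \<le> 2 * Fm * \<bar>g x - g x'\<bar> + 2 * \<bar>I x - I x'\<bar>"
proof -
  have integrable: "set_integrable lborel \<Omega> (\<lambda>y. (ws x y - ws x' y) * Ns y)"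
    using set_integral_diff(1)[OF conjunct1[OF Ss[OF x]] conjunct1[OF Ss[OF x']]] by (simp add: left_diff_distrib)
  have "\<bar>LINT y:\<Omega>|lborel. (ws x y - ws x' y) * Ns y\<bar> \<le> \<gamma> * \<bar>Ns x - Ns x'\<bar> * Fm"
  proof (rule abs_set_integral_mult_le[OF integrable g_int g_mass])
    fix y assume y: "y \<in> \<Omega>"
    show "\<bar>ws x y - ws x' y\<bar> \<le> \<gamma> * \<bar>Ns x - Ns x'\<bar>"
      using ws[OF x y] ws[OF x' y] \<gamma> G_lip[of "Ns x" "Ns y" "Ns x'" "Ns y"]
      by (simp add: abs_mult mult_left_mono flip: right_diff_distrib)
    show "\<bar>Ns y\<bar> \<le> Fm * g y"
      using Ns[OF y] abs_activity_le[OF g_nonneg[OF y] F_bounds] by simp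
  qed
  moreover have "Ss x - Ss x' = (LINT y:\<Omega>|lborel. (ws x y - ws x' y) * Ns y) + (I x - I x')"
    using Ss[OF x] Ss[OF x'] set_integral_diff(2)[OF conjunct1[OF Ss[OF x]] conjunct1[OF Ss[OF x']]]
    by (simp add: left_diff_distrib)
  ultimately have S_diff: "\<bar>Ss x - Ss x'\<bar> \<le> \<gamma> * Fm * \<bar>Ns x - Ns x'\<bar> + \<bar>I x - I x'\<bar>"
    by (simp add: mult_ac)
  have N_diff: "\<bar>Ns x - Ns x'\<bar> \<le> Fm * \<bar>g x - g x'\<bar> + B * L * \<bar>Ss x - Ss x'\<bar>"
  proof -
    have "Ns x - Ns x' = (g x - g x') * F (Ss x) + g x' * (F (Ss x) - F (Ss x'))"
      using Ns[OF x] Ns[OF x'] by (simp add: algebra_simps)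
    moreover have "\<bar>(g x - g x') * F (Ss x)\<bar> \<le> Fm * \<bar>g x - g x'\<bar>"
      using abs_activity_le[OF abs_ge_zero F_bounds] by (simp add: abs_mult)
    moreover have "\<bar>g x' * (F (Ss x) - F (Ss x'))\<bar> \<le> B * (L * \<bar>Ss x - Ss x'\<bar>)"
      using g_nonneg[OF x'] g_le[OF x'] F_lip[of "Ss x" "Ss x'"] L
      by (simp add: abs_mult) (intro mult_mono, auto)
    ultimately show ?thesis
      using abs_triangle_ineq[of "(g x - g x') * F (Ss x)" "g x' * (F (Ss x) - F (Ss x'))"] by (simp add: mult_ac)
  qed
  have "B * L * \<bar>Ss x - Ss x'\<bar> \<le> (B * L * \<gamma> * Fm) * \<bar>Ns x - Ns x'\<bar> + (B * L) * \<bar>I x - I x'\<bar>"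
    using mult_left_mono[OF S_diff, of "B * L"] g_nonneg[OF x] g_le[OF x] L by (simp add: algebra_simps)
  also have "\<dots> \<le> 1/2 * \<bar>Ns x - Ns x'\<bar> + 1 * \<bar>I x - I x'\<bar>"
    using small by (intro add_mono mult_right_mono) auto
  finally have "B * L * \<bar>Ss x - Ss x'\<bar> \<le> 1/2 * \<bar>Ns x - Ns x'\<bar> + 1 * \<bar>I x - I x'\<bar>" .
  moreover have "\<And>a b c f :: real. a \<le> f + b \<Longrightarrow> b \<le> 1/2 * a + 1 * c \<Longrightarrow> a \<le> 2 * f + 2 * c"
    by linarith
  ultimately have "\<bar>Ns x - Ns x'\<bar> \<le> 2 * (Fm * \<bar>g x - g x'\<bar>) + 2 * \<bar>I x - I x'\<bar>"
    using N_diff by blast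
  then show ?thesis by (simp only: mult.assoc)
qed

section \<open>Regularity of the data\<close>

lemma continuous_on_of_abs_diff_le:
  fixes f u v :: "'a::metric_space \<Rightarrow> real"
  assumes "continuous_on X u" "continuous_on X v"
    and le: "\<And>x x'. x \<in> X \<Longrightarrow> x' \<in> X \<Longrightarrow> \<bar>f x' - f x\<bar> \<le> \<bar>u x' - u x\<bar> + \<bar>v x' - v x\<bar>"
  shows "continuous_on X f"
  unfolding continuous_on_def
proof
  fix x assume x: "x \<in> X"
  have "(u \<longlongrightarrow> u x) (at x within X)" "(v \<longlongrightarrow> v x) (at x within X)"
    using assms(1,2) x unfolding continuous_on_def by auto
  then have "((\<lambda>x'. \<bar>u x' - u x\<bar> + \<bar>v x' - v x\<bar>) \<longlongrightarrow> 0) (at x within X)"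
    by (intro tendsto_add_zero tendsto_rabs_zero LIM_zero)
  moreover have "eventually (\<lambda>x'. norm (f x' - f x) \<le> \<bar>u x' - u x\<bar> + \<bar>v x' - v x\<bar>) (at x within X)"
    unfolding eventually_at_filter by (rule always_eventually) (simp add: le x)
  ultimately have "((\<lambda>x'. f x' - f x) \<longlongrightarrow> 0) (at x within X)"
    by (rule Lim_null_comparison[rotated])
  then show "(f \<longlongrightarrow> f x) (at x within X)"
    by (rule LIM_zero_cancel)
qed

lemma bound_lipschitz_of_norm_bound:
  fixes G :: "real \<times> real \<Rightarrow> real" and G' :: "real \<times> real \<Rightarrow> real \<times> real \<Rightarrow> real"
  assumes G_deriv: "\<And>z. (G has_derivative G' z) (at z)"
    and G_norm: "\<exists>a b. a + b \<le> 1 \<and> (\<forall>z. \<bar>G z\<bar> \<le> a) \<and> (\<forall>z. onorm (G' z) \<le> b)"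
  shows "\<bar>G z\<bar> \<le> 1" and "\<bar>G (a, b) - G (c, d)\<bar> \<le> \<bar>a - c\<bar> + \<bar>b - d\<bar>"
proof -
  obtain A B where AB: "A + B \<le> 1" "\<And>z. \<bar>G z\<bar> \<le> A" "\<And>z. onorm (G' z) \<le> B"
    using G_norm by blast
  have "0 \<le> A" using AB(2)[of 0] by linarith
  moreover have "0 \<le> B"
    using AB(3)[of 0] onorm_pos_le[OF has_derivative_bounded_linear[OF G_deriv[of 0]]] by linarith
  ultimately show "\<bar>G z\<bar> \<le> 1" using AB(1) AB(2)[of z] by linarith
  have "norm (G (a, b) - G (c, d)) \<le> B * norm ((a, b) - (c, d))"
    by (rule differentiable_bound[where S=UNIV and f'=G']) (use G_deriv AB(3) in auto)
  also have "\<dots> \<le> 1 * norm ((a, b) - (c, d))"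
    using AB \<open>0 \<le> A\<close> by (intro mult_right_mono) auto
  also have "\<dots> \<le> \<bar>a - c\<bar> + \<bar>b - d\<bar>"
    using norm_Pair_le[of "a - c" "b - d"] by simp
  finally show "\<bar>G (a, b) - G (c, d)\<bar> \<le> \<bar>a - c\<bar> + \<bar>b - d\<bar>" by simp
qed

lemma
  fixes \<Omega> :: "'a::euclidean_space set" and n0 :: "real \<Rightarrow> 'a \<Rightarrow> real"
  assumes "Cb_L1s \<Omega> n0"
  shows continuous_on_Cb_L1s_integral: "continuous_on \<Omega> (\<lambda>x. LINT s:{0<..}|lborel. n0 s x)"
    and bounded_Cb_L1s_integral: "\<exists>B\<ge>0. \<forall>x\<in>\<Omega>. \<bar>LINT s:{0<..}|lborel. n0 s x\<bar> \<le> B"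
proof -
  have int: "\<And>x. x \<in> \<Omega> \<Longrightarrow> set_integrable lborel {0<..} (\<lambda>s. n0 s x)"
    using assms unfolding Cb_L1s_def by blast
  obtain B where B: "\<And>x. x \<in> \<Omega> \<Longrightarrow> L1_s (\<lambda>s. n0 s x) \<le> ennreal B"
    using assms unfolding Cb_L1s_def by blast
  show "\<exists>B\<ge>0. \<forall>x\<in>\<Omega>. \<bar>LINT s:{0<..}|lborel. n0 s x\<bar> \<le> B"
  proof (intro exI[of _ "max 0 B"] conjI ballI)
    fix x assume "x \<in> \<Omega>"
    then have "ennreal \<bar>LINT s:{0<..}|lborel. n0 s x\<bar> \<le> ennreal (max 0 B)"
      using abs_set_integral_le_L1_s[OF int] B by (metis ennreal_max_0 order_trans)
    then show "\<bar>LINT s:{0<..}|lborel. n0 s x\<bar> \<le> max 0 B" by simp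
  qed simp
  show "continuous_on \<Omega> (\<lambda>x. LINT s:{0<..}|lborel. n0 s x)"
    unfolding continuous_on_iff
  proof (intro ballI allI impI)
    fix x and e :: real assume x: "x \<in> \<Omega>" and "0 < e"
    then obtain d where "d > 0" and d: "\<And>y. y \<in> \<Omega> \<Longrightarrow> dist y x < d \<Longrightarrow> L1_s (\<lambda>s. n0 s y - n0 s x) < ennreal e"
      using assms unfolding Cb_L1s_def by metis
    have "dist (LINT s:{0<..}|lborel. n0 s y) (LINT s:{0<..}|lborel. n0 s x) < e"
      if y: "y \<in> \<Omega>" "dist y x < d" for y
    proof -
      have "ennreal \<bar>LINT s:{0<..}|lborel. n0 s y - n0 s x\<bar> \<le> L1_s (\<lambda>s. n0 s y - n0 s x)"
        by (intro abs_set_integral_le_L1_s set_integral_diff int x y)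
      also have "\<dots> < ennreal e" by (rule d[OF y])
      finally show ?thesis
        using int[OF x] int[OF y(1)] by (simp add: dist_real_def ennreal_less_iff)
    qed
    with \<open>d > 0\<close> show "\<exists>d>0. \<forall>y\<in>\<Omega>. dist y x < d \<longrightarrow> dist (LINT s:{0<..}|lborel. n0 s y) (LINT s:{0<..}|lborel. n0 s x) < e"
      by blast
  qed
qed

section \<open>Convergence of the limit system\<close>

text \<open>The factor \<open>16\<close> in \<open>small\<close> makes the forcing term of the weight equation at most a
  quarter of the current weight gap (lemma \<open>activity_gap\<close>).\<close>

locale network_solutions = bounded_rate p p_low p_inf
  for p :: "real \<Rightarrow> real \<Rightarrow> real" and p_low p_inf :: real +
  fixes \<Omega> :: "'a::euclidean_space set" and \<gamma> \<delta> B :: real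
    and G :: "real \<times> real \<Rightarrow> real" and I g :: "'a \<Rightarrow> real" and w0 :: "'a \<Rightarrow> 'a \<Rightarrow> real"
    and ns :: "real \<Rightarrow> 'a \<Rightarrow> real" and Ns Ss :: "'a \<Rightarrow> real" and ws :: "'a \<Rightarrow> 'a \<Rightarrow> real"
    and n :: "real \<Rightarrow> real \<Rightarrow> 'a \<Rightarrow> real" and N S :: "real \<Rightarrow> 'a \<Rightarrow> real"
    and w :: "real \<Rightarrow> 'a \<Rightarrow> 'a \<Rightarrow> real"
  assumes \<Omega>_open: "open \<Omega>" and \<Omega>_bounded: "bounded \<Omega>" and \<Omega>_nonempty: "\<Omega> \<noteq> {}"
    and I_cont: "continuous_on \<Omega> I"
    and G_cont: "continuous_on UNIV G" and G_bound: "\<And>z. \<bar>G z\<bar> \<le> 1"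
    and G_lip: "\<And>a b c d. \<bar>G (a, b) - G (c, d)\<bar> \<le> \<bar>a - c\<bar> + \<bar>b - d\<bar>"
    and g_nonneg: "\<And>x. x \<in> \<Omega> \<Longrightarrow> 0 \<le> g x" and g_le: "\<And>x. x \<in> \<Omega> \<Longrightarrow> g x \<le> B"
    and g_cont: "continuous_on \<Omega> g" and g_int: "set_integrable lborel \<Omega> g"
    and g_mass: "(LINT x:\<Omega>|lborel. g x) = 1"
    and w0_cont: "continuous_on (\<Omega> \<times> \<Omega>) (\<lambda>(x, y). w0 x y)"
    and w0_bdd: "bounded ((\<lambda>(x, y). w0 x y) ` (\<Omega> \<times> \<Omega>))"
    and \<gamma>_nonneg: "0 \<le> \<gamma>" and \<gamma>_le_1: "\<gamma> \<le> 1"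
    and dS: "dS_bound p \<delta>" and \<delta>_nonneg: "0 \<le> \<delta>"
    and small: "16 * (B + 1) * (p_inf + 1) * ((p_inf / p_low) ^ 2 * \<delta>) \<le> 1"
    and stationary: "stationary_state \<Omega> p \<gamma> G I g ns Ns Ss ws"
    and solution: "limit_solution \<Omega> p \<gamma> G I g w0 n N S w"
begin

definition activity_lip :: real where
  "activity_lip = (p_inf / p_low) ^ 2 * \<delta>"

lemma abs_activity_diff_le: "\<bar>activity u - activity v\<bar> \<le> activity_lip * \<bar>u - v\<bar>"
  using activity_lipschitz[OF dS] by (simp add: activity_lip_def)

lemma activity_lip_nonneg: "0 \<le> activity_lip"
  using \<delta>_nonneg by (simp add: activity_lip_def)

lemma activity_nonneg_le: "0 \<le> activity v \<and> activity v \<le> p_inf"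
  using activity_bounds p_low_pos by (meson less_le_trans less_imp_le)

lemma B_nonneg: "0 \<le> B"
  using \<Omega>_nonempty g_nonneg g_le by (meson ex_in_conv order_trans)

lemma smallness: "B * activity_lip * p_inf \<le> 1/16" "activity_lip \<le> 1/16" "B * activity_lip \<le> 1/16"
proof -
  have split: "\<And>a b c d :: real. 16 * (a + b + c + d) \<le> 1 \<Longrightarrow> 0 \<le> a \<Longrightarrow> 0 \<le> b \<Longrightarrow> 0 \<le> c \<Longrightarrow> 0 \<le> d
      \<Longrightarrow> a \<le> 1/16 \<and> d \<le> 1/16 \<and> b \<le> 1/16"
    by auto
  have "16 * (B * activity_lip * p_inf + B * activity_lip + p_inf * activity_lip + activity_lip) \<le> 1"
    using small unfolding activity_lip_def by (simp add: algebra_simps)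
  from split[OF this] show "B * activity_lip * p_inf \<le> 1/16" "activity_lip \<le> 1/16" "B * activity_lip \<le> 1/16"
    using B_nonneg p_inf_pos activity_lip_nonneg by simp_all
qed

lemmas stationary_at = stationary[unfolded stationary_state_def, THEN conjunct1, rule_format]
lemmas solution_at = solution[unfolded limit_solution_def, THEN conjunct1, rule_format]
lemmas weight_at = solution[unfolded limit_solution_def, THEN conjunct2, rule_format]

lemma stationary_age_profile:
  assumes "x \<in> \<Omega>"
  shows "continuous_on {0..} (\<lambda>s. ns s x)"
    and "\<forall>s>0. ((\<lambda>\<sigma>. ns \<sigma> x) has_real_derivative (- p s (Ss x) * ns s x)) (at s)"
    and "(LINT s:{0<..}|lborel. ns s x) = g x" and "Ns x = ns 0 x"
  using stationary_at[OF assms] by blast+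

lemma stationary_input_eq:
  "x \<in> \<Omega> \<Longrightarrow> set_integrable lborel \<Omega> (\<lambda>y. ws x y * Ns y) \<and> Ss x = (LINT y:\<Omega>|lborel. ws x y * Ns y) + I x"
  using stationary_at by simp

lemma stationary_weight: "x \<in> \<Omega> \<Longrightarrow> y \<in> \<Omega> \<Longrightarrow> ws x y = \<gamma> * G (Ns x, Ns y)"
  using stationary[unfolded stationary_state_def, THEN conjunct2] by simp

lemma age_profile:
  assumes "t \<ge> 0" "x \<in> \<Omega>"
  shows "continuous_on {0..} (\<lambda>s. n t s x)"
    and "\<forall>s>0. ((\<lambda>\<sigma>. n t \<sigma> x) has_real_derivative (- p s (S t x) * n t s x)) (at s)"
    and "(LINT s:{0<..}|lborel. n t s x) = g x" and "N t x = n t 0 x"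
  using solution_at[OF assms] by blast+

lemma input_eq:
  "t \<ge> 0 \<Longrightarrow> x \<in> \<Omega> \<Longrightarrow>
    set_integrable lborel \<Omega> (\<lambda>y. w t x y * N t y) \<and> S t x = (LINT y:\<Omega>|lborel. w t x y * N t y) + I x"
  using solution_at by simp

lemma weight_dynamics:
  assumes "x \<in> \<Omega>" "y \<in> \<Omega>"
  shows "continuous_on {0..} (\<lambda>t. w t x y)"
    and "\<And>t. t > 0 \<Longrightarrow> ((\<lambda>\<tau>. w \<tau> x y) has_real_derivative (- w t x y + \<gamma> * G (N t x, N t y))) (at t)"
    and "w 0 x y = w0 x y"
  using weight_at[OF assms] by simp_all

lemma stationary_activity_eq: "x \<in> \<Omega> \<Longrightarrow> Ns x = g x * activity (Ss x)"
  using age_profile_boundary[OF stationary_age_profile(1-3)] stationary_age_profile(4) by metis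

lemma stationary_density_eq: "x \<in> \<Omega> \<Longrightarrow> s \<ge> 0 \<Longrightarrow> ns s x = Ns x * survival (Ss x) s"
  using age_profile_eq[OF stationary_age_profile(1,2)] stationary_age_profile(4) by metis

lemma activity_eq: "t \<ge> 0 \<Longrightarrow> x \<in> \<Omega> \<Longrightarrow> N t x = g x * activity (S t x)"
  using age_profile_boundary[OF age_profile(1-3)] age_profile(4) by metis

lemma density_eq: "t \<ge> 0 \<Longrightarrow> x \<in> \<Omega> \<Longrightarrow> s \<ge> 0 \<Longrightarrow> n t s x = N t x * survival (S t x) s"
  using age_profile_eq[OF age_profile(1,2)] age_profile(4) by metis

lemma abs_stationary_weight_le: "x \<in> \<Omega> \<Longrightarrow> y \<in> \<Omega> \<Longrightarrow> \<bar>ws x y\<bar> \<le> 1"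
  using stationary_weight G_bound \<gamma>_nonneg \<gamma>_le_1 by (simp add: abs_mult mult_le_one)

lemma weight_bounded: "\<exists>M. \<forall>t\<ge>0. \<forall>x\<in>\<Omega>. \<forall>y\<in>\<Omega>. \<bar>w t x y\<bar> \<le> M"
proof -
  obtain M0 where M0: "\<And>x y. x \<in> \<Omega> \<Longrightarrow> y \<in> \<Omega> \<Longrightarrow> \<bar>w0 x y\<bar> \<le> M0"
    using w0_bdd unfolding bounded_iff by fastforce
  have "\<bar>w t x y\<bar> \<le> M0 + 1" if "t \<ge> 0" "x \<in> \<Omega>" "y \<in> \<Omega>" for t x y
  proof -
    have "\<bar>w t x y\<bar> \<le> \<bar>w 0 x y\<bar> + 1"
      using G_bound \<gamma>_nonneg \<gamma>_le_1 weight_dynamics[OF that(2,3)] that(1)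
      by (intro damped_ode_bounded[where k="\<lambda>\<tau>. \<gamma> * G (N \<tau> x, N \<tau> y)"]) (auto simp: abs_mult mult_le_one)
    then show ?thesis using M0[OF that(2,3)] weight_dynamics(3)[OF that(2,3)] by simp
  qed
  then show ?thesis by blast
qed

lemma input_gap:
  assumes t: "t \<ge> 0" and gap: "\<And>x y. x \<in> \<Omega> \<Longrightarrow> y \<in> \<Omega> \<Longrightarrow> \<bar>w t x y - ws x y\<bar> \<le> d"
    and x: "x \<in> \<Omega>"
  shows "\<bar>S t x - Ss x\<bar> \<le> 2 * (d * p_inf)"
proof -
  obtain M where "\<And>x y. x \<in> \<Omega> \<Longrightarrow> y \<in> \<Omega> \<Longrightarrow> \<bar>w t x y\<bar> \<le> M"
    using weight_bounded t by blast
  from input_diff_le[OF \<Omega>_nonempty input_eq[OF t] stationary_input_eq activity_eq[OF t] stationary_activity_eq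
      g_nonneg g_int g_mass activity_nonneg_le abs_activity_diff_le activity_lip_nonneg this abs_stationary_weight_le gap]
  show ?thesis using smallness(2) x by simp
qed

lemma activity_gap:
  assumes t: "t \<ge> 0" and gap: "\<And>x y. x \<in> \<Omega> \<Longrightarrow> y \<in> \<Omega> \<Longrightarrow> \<bar>w t x y - ws x y\<bar> \<le> d"
    and x: "x \<in> \<Omega>"
  shows "\<bar>N t x - Ns x\<bar> \<le> d / 8"
proof -
  have "0 \<le> d" using gap[OF x x] by linarith
  have "\<bar>N t x - Ns x\<bar> = g x * \<bar>activity (S t x) - activity (Ss x)\<bar>"
    using activity_eq[OF t x] stationary_activity_eq[OF x] g_nonneg[OF x]
    by (simp add: abs_mult flip: right_diff_distrib)
  also have "\<dots> \<le> B * (activity_lip * (2 * (d * p_inf)))"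
    using g_nonneg[OF x] g_le[OF x] B_nonneg activity_lip_nonneg abs_activity_diff_le[of "S t x" "Ss x"]
      input_gap[OF t gap x]
    by (intro mult_mono) (auto intro: order_trans mult_left_mono)
  also have "\<dots> = 2 * d * (B * activity_lip * p_inf)"
    by (simp add: mult_ac)
  also have "\<dots> \<le> 2 * d * (1/16)"
    using smallness(1) \<open>0 \<le> d\<close> by (intro mult_left_mono) auto
  finally show ?thesis by simp
qed

definition initial_gap :: real where
  "initial_gap = Sup ((\<lambda>(x, y). \<bar>w0 x y - ws x y\<bar>) ` (\<Omega> \<times> \<Omega>))"

lemma initial_gap_bdd: "bdd_above ((\<lambda>(x, y). \<bar>w0 x y - ws x y\<bar>) ` (\<Omega> \<times> \<Omega>))"
proof -
  obtain M0 where M0: "\<And>x y. x \<in> \<Omega> \<Longrightarrow> y \<in> \<Omega> \<Longrightarrow> \<bar>w0 x y\<bar> \<le> M0"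
    using w0_bdd unfolding bounded_iff by fastforce
  show ?thesis
    using M0 abs_stationary_weight_le by (intro bdd_aboveI[of _ "M0 + 1"]) force
qed

lemma initial_gap_le: "x \<in> \<Omega> \<Longrightarrow> y \<in> \<Omega> \<Longrightarrow> \<bar>w0 x y - ws x y\<bar> \<le> initial_gap"
  unfolding initial_gap_def using initial_gap_bdd by (force intro: cSup_upper)

lemma initial_gap_nonneg: "0 \<le> initial_gap"
  using initial_gap_le \<Omega>_nonempty by (meson abs_ge_zero ex_in_conv order_trans)

lemma weight_gap_decay:
  assumes "t \<ge> 0" "x \<in> \<Omega>" "y \<in> \<Omega>"
  shows "\<bar>w t x y - ws x y\<bar> \<le> 2 * (initial_gap * exp (- t / 2))"
proof -
  obtain M where M: "\<And>t x y. t \<ge> 0 \<Longrightarrow> x \<in> \<Omega> \<Longrightarrow> y \<in> \<Omega> \<Longrightarrow> \<bar>w t x y\<bar> \<le> M"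
    using weight_bounded by blast
  define e where "e t z = w t (fst z) (snd z) - ws (fst z) (snd z)" for t z
  define k where "k t z = \<gamma> * (G (N t (fst z), N t (snd z)) - G (Ns (fst z), Ns (snd z)))" for t z
  have "\<bar>e t (x, y)\<bar> \<le> 2 * initial_gap * exp (- t / 2)"
  proof (rule uniform_damped_ode_decay[where k=k and M="M + 1"])
    show "\<bar>e t z\<bar> \<le> M + 1" if "0 \<le> t" "z \<in> \<Omega> \<times> \<Omega>" for t z
      using M[of t "fst z" "snd z"] abs_stationary_weight_le[of "fst z" "snd z"] that
      unfolding e_def by force
    show "continuous_on {0..} (\<lambda>t. e t z)" if "z \<in> \<Omega> \<times> \<Omega>" for z
      unfolding e_def using that by (intro continuous_on_diff weight_dynamics(1) continuous_on_const) auto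
    show "((\<lambda>t. e t z) has_real_derivative - e t z + k t z) (at t)" if "z \<in> \<Omega> \<times> \<Omega>" "0 < t" for z t
      using DERIV_diff[OF weight_dynamics(2)[of "fst z" "snd z" t] DERIV_const[of "ws (fst z) (snd z)"]]
        stationary_weight[of "fst z" "snd z"] that
      unfolding e_def k_def by (auto elim!: DERIV_cong simp: algebra_simps)
    show "\<bar>k t z\<bar> \<le> d / 4"
      if "0 < t" and gap: "\<And>z. z \<in> \<Omega> \<times> \<Omega> \<Longrightarrow> \<bar>e t z\<bar> \<le> d" and z: "z \<in> \<Omega> \<times> \<Omega>" for t d z
    proof -
      have "\<bar>N t x - Ns x\<bar> \<le> d / 8" if "x \<in> \<Omega>" for x
        using gap \<open>0 < t\<close> that by (intro activity_gap) (auto simp: e_def)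
      from this[of "fst z"] this[of "snd z"] z
      have "\<bar>G (N t (fst z), N t (snd z)) - G (Ns (fst z), Ns (snd z))\<bar> \<le> d / 4"
        using G_lip[of "N t (fst z)" "N t (snd z)" "Ns (fst z)" "Ns (snd z)"] by auto
      moreover have "\<bar>k t z\<bar> \<le> \<bar>G (N t (fst z), N t (snd z)) - G (Ns (fst z), Ns (snd z))\<bar>"
        unfolding k_def using \<gamma>_nonneg \<gamma>_le_1 by (simp add: abs_mult mult_left_le_one_le)
      ultimately show ?thesis by linarith
    qed
    show "\<bar>e 0 z\<bar> \<le> initial_gap" if "z \<in> \<Omega> \<times> \<Omega>" for z
      using initial_gap_le[of "fst z" "snd z"] weight_dynamics(3)[of "fst z" "snd z"] that
      unfolding e_def by force
  qed (use assms \<Omega>_nonempty in auto)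
  then show ?thesis by (simp add: e_def mult.assoc)
qed

lemma input_decay:
  assumes "t \<ge> 0" "x \<in> \<Omega>"
  shows "\<bar>S t x - Ss x\<bar> \<le> 4 * p_inf * initial_gap * exp (- t / 2)"
proof -
  have "\<bar>S t x - Ss x\<bar> \<le> 2 * (2 * (initial_gap * exp (- t / 2)) * p_inf)"
    by (rule input_gap[OF assms(1) weight_gap_decay[OF assms(1)] assms(2)])
  also have "\<dots> = 4 * p_inf * initial_gap * exp (- t / 2)"
    by simp
  finally show ?thesis .
qed

lemma activity_decay:
  assumes "t \<ge> 0" "x \<in> \<Omega>"
  shows "\<bar>N t x - Ns x\<bar> \<le> initial_gap * exp (- t / 2)"
  using activity_gap[OF assms(1) weight_gap_decay[OF assms(1)] assms(2)]
    mult_nonneg_nonneg[OF initial_gap_nonneg exp_ge_zero[of "- t / 2"]] by linarith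

lemma abs_stationary_activity_le:
  assumes "x \<in> \<Omega>"
  shows "\<bar>Ns x\<bar> \<le> B * p_inf"
proof -
  have "\<bar>Ns x\<bar> \<le> p_inf * g x"
    using stationary_activity_eq[OF assms] abs_activity_le[OF g_nonneg[OF assms] activity_nonneg_le] by simp
  also have "\<dots> \<le> p_inf * B"
    using g_le[OF assms] p_inf_pos by (intro mult_left_mono) auto
  finally show ?thesis by (simp add: mult.commute)
qed

lemma density_decay:
  assumes t: "t \<ge> 0" and x: "x \<in> \<Omega>"
  shows "L1_s (\<lambda>s. n t s x - ns s x) \<le> ennreal ((1 / p_low + 1) * initial_gap * exp (- t / 2))"
proof -
  define d where "d = 2 * (initial_gap * exp (- t / 2))"
  have "0 \<le> d" using initial_gap_nonneg by (simp add: d_def)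
  have "L1_s (\<lambda>s. n t s x - ns s x) = L1_s (\<lambda>s. N t x * survival (S t x) s - Ns x * survival (Ss x) s)"
    using density_eq[OF t x] stationary_density_eq[OF x] by (intro L1_s_cong) simp
  also have "\<dots> \<le> ennreal (\<bar>N t x - Ns x\<bar> / p_low + \<bar>Ns x\<bar> * \<delta> * \<bar>S t x - Ss x\<bar> / p_low ^ 2)"
    by (rule L1_s_scaled_survival_diff[OF dS])
  also have "\<dots> \<le> ennreal ((1 / p_low + 1) * initial_gap * exp (- t / 2))"
  proof (rule ennreal_leI)
    have "\<bar>N t x - Ns x\<bar> / p_low \<le> d / 8 / p_low"
      using activity_gap[OF t weight_gap_decay[OF t] x] p_low_pos
      by (intro divide_right_mono) (auto simp: d_def)
    moreover have "\<bar>Ns x\<bar> * \<delta> * \<bar>S t x - Ss x\<bar> / p_low ^ 2 \<le> (B * p_inf) * \<delta> * (2 * (d * p_inf)) / p_low ^ 2"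
      using abs_stationary_activity_le[OF x] input_gap[OF t weight_gap_decay[OF t] x] \<delta>_nonneg
      by (intro divide_right_mono mult_mono) (auto simp: d_def)
    moreover have "(B * p_inf) * \<delta> * (2 * (d * p_inf)) / p_low ^ 2 = 2 * d * (B * activity_lip)"
      by (simp add: activity_lip_def power_divide power2_eq_square)
    moreover have "2 * d * (B * activity_lip) \<le> d / 8"
      using mult_left_mono[OF smallness(3) \<open>0 \<le> d\<close>] by simp
    moreover have "d / 8 / p_low + d / 8 \<le> (1 / p_low + 1) * initial_gap * exp (- t / 2)"
      using p_low_pos initial_gap_nonneg by (simp add: d_def field_simps)
    ultimately show "\<bar>N t x - Ns x\<bar> / p_low + \<bar>Ns x\<bar> * \<delta> * \<bar>S t x - Ss x\<bar> / p_low ^ 2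
        \<le> (1 / p_low + 1) * initial_gap * exp (- t / 2)"
      by linarith
  qed
  finally show ?thesis .
qed

lemma continuous_on_stationary_activity: "continuous_on \<Omega> Ns"
proof (rule continuous_on_of_abs_diff_le)
  show "continuous_on \<Omega> (\<lambda>x. 2 * p_inf * g x)" "continuous_on \<Omega> (\<lambda>x. 2 * I x)"
    by (intro continuous_intros g_cont I_cont)+
  have "\<gamma> * (B * activity_lip * p_inf) \<le> B * activity_lip * p_inf"
    using B_nonneg activity_lip_nonneg p_inf_pos \<gamma>_nonneg \<gamma>_le_1 by (intro mult_left_le_one_le) auto
  moreover have "B * activity_lip * \<gamma> * p_inf = \<gamma> * (B * activity_lip * p_inf)"
    by (simp add: mult_ac)
  ultimately have small': "B * activity_lip * \<gamma> * p_inf \<le> 1/2" "B * activity_lip \<le> 1"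
    using smallness by linarith+
  fix x x' assume "x \<in> \<Omega>" "x' \<in> \<Omega>"
  have "\<bar>2 * p_inf * g x' - 2 * p_inf * g x\<bar> = 2 * p_inf * \<bar>g x' - g x\<bar>"
    using p_inf_pos unfolding right_diff_distrib[symmetric] abs_mult by simp
  moreover have "\<bar>2 * I x' - 2 * I x\<bar> = 2 * \<bar>I x' - I x\<bar>"
    unfolding right_diff_distrib[symmetric] abs_mult by simp
  ultimately
  show "\<bar>Ns x' - Ns x\<bar> \<le> \<bar>2 * p_inf * g x' - 2 * p_inf * g x\<bar> + \<bar>2 * I x' - 2 * I x\<bar>"
    using stationary_activity_diff_le[OF \<open>x' \<in> \<Omega>\<close> \<open>x \<in> \<Omega>\<close> stationary_input_eq stationary_activity_eq
      stationary_weight G_lip g_nonneg g_le g_int g_mass activity_nonneg_le abs_activity_diff_le activity_lip_nonneg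
      \<gamma>_nonneg small']
    by simp
qed

lemma continuous_on_stationary_weight: "continuous_on (\<Omega> \<times> \<Omega>) (\<lambda>(x, y). ws x y)"
proof -
  have "continuous_on (\<Omega> \<times> \<Omega>) (\<lambda>z. Ns (fst z))" "continuous_on (\<Omega> \<times> \<Omega>) (\<lambda>z. Ns (snd z))"
    by (rule continuous_on_compose2[OF continuous_on_stationary_activity], (intro continuous_intros), force)+
  then have "continuous_on (\<Omega> \<times> \<Omega>) (\<lambda>z. \<gamma> * G (Ns (fst z), Ns (snd z)))"
    by (intro continuous_intros continuous_on_compose2[OF G_cont]) auto
  then show ?thesis
    by (rule continuous_on_cong[THEN iffD1, rotated 2]) (auto simp: stationary_weight)
qed

lemma L1_initial_gap_pos:
  assumes "initial_gap > 0"
  shows "0 < L1_xy \<Omega> (\<lambda>x y. w0 x y - ws x y)"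
proof -
  have "\<exists>x0\<in>\<Omega>. \<exists>y0\<in>\<Omega>. w0 x0 y0 - ws x0 y0 \<noteq> 0"
  proof (rule ccontr)
    assume "\<not> ?thesis"
    then have "(\<lambda>(x, y). \<bar>w0 x y - ws x y\<bar>) ` (\<Omega> \<times> \<Omega>) = (\<lambda>_. 0) ` (\<Omega> \<times> \<Omega>)"
      by (intro image_cong) auto
    also have "\<dots> = {0}" using \<Omega>_nonempty by auto
    finally show False using assms by (simp add: initial_gap_def)
  qed
  then obtain x0 y0 where "x0 \<in> \<Omega>" "y0 \<in> \<Omega>" "w0 x0 y0 - ws x0 y0 \<noteq> 0" by blast
  moreover have "continuous_on (\<Omega> \<times> \<Omega>) (\<lambda>(x, y). w0 x y - ws x y)"
    using continuous_on_diff[OF w0_cont continuous_on_stationary_weight] by (simp add: case_prod_beta)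
  ultimately show ?thesis
    by (intro L1_xy_pos_of_continuous \<Omega>_open)
qed

lemma L1_initial_gap_finite: "L1_xy \<Omega> (\<lambda>x y. w0 x y - ws x y) < \<infinity>"
proof -
  have "L1_xy \<Omega> (\<lambda>x y. w0 x y - ws x y) \<le> ennreal initial_gap * emeasure lborel \<Omega> * emeasure lborel \<Omega>"
    using \<Omega>_open initial_gap_le by (intro L1_xy_le) auto
  also have "\<dots> < \<infinity>"
    using emeasure_bounded_finite[OF \<Omega>_bounded] by (simp add: ennreal_mult_less_top)
  finally show ?thesis .
qed

abbreviation \<mu> :: real where
  "\<mu> \<equiv> measure lborel \<Omega>"

lemma emeasure_domain: "emeasure lborel \<Omega> = ennreal \<mu>"
  using emeasure_bounded_finite[OF \<Omega>_bounded] by (simp add: emeasure_eq_ennreal_measure)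

lemma L1_input_decay:
  "t \<ge> 0 \<Longrightarrow> L1_x \<Omega> (\<lambda>x. S t x - Ss x) \<le> ennreal (4 * p_inf * initial_gap * \<mu> * exp (- t / 2))"
  using L1_x_le[of \<Omega> "\<lambda>x. S t x - Ss x", OF _ input_decay] \<Omega>_open p_inf_pos initial_gap_nonneg
  by (simp add: emeasure_domain ennreal_mult[symmetric] mult_ac)

lemma L1_activity_decay:
  "t \<ge> 0 \<Longrightarrow> L1_x \<Omega> (\<lambda>x. N t x - Ns x) \<le> ennreal (initial_gap * \<mu> * exp (- t / 2))"
  using L1_x_le[of \<Omega> "\<lambda>x. N t x - Ns x", OF _ activity_decay] \<Omega>_open initial_gap_nonneg
  by (simp add: emeasure_domain ennreal_mult[symmetric] mult_ac)

lemma L1_state_decay: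
  assumes "t \<ge> 0"
  shows "L1_sx \<Omega> (\<lambda>s x. n t s x - ns s x) + L1_xy \<Omega> (\<lambda>x y. w t x y - ws x y)
    \<le> ennreal ((1 / p_low + 1 + 2 * \<mu>) * \<mu> * initial_gap * exp (- t / 2))"
proof -
  define c1 where "c1 = (1 / p_low + 1) * initial_gap * exp (- t / 2)"
  define c2 where "c2 = 2 * (initial_gap * exp (- t / 2))"
  have \<mu>_nonneg: "0 \<le> \<mu>" and c1: "0 \<le> c1" and c2: "0 \<le> c2"
    using initial_gap_nonneg p_low_pos by (simp_all add: c1_def c2_def)
  have "L1_sx \<Omega> (\<lambda>s x. n t s x - ns s x) \<le> ennreal (c1 * \<mu>)"
    unfolding ennreal_mult[OF c1 \<mu>_nonneg] emeasure_domain[symmetric]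
    using \<Omega>_open density_decay[OF assms, folded c1_def] by (intro L1_sx_le) auto
  moreover have "L1_xy \<Omega> (\<lambda>x y. w t x y - ws x y) \<le> ennreal (c2 * \<mu> * \<mu>)"
    unfolding ennreal_mult[OF mult_nonneg_nonneg[OF c2 \<mu>_nonneg] \<mu>_nonneg]
      ennreal_mult[OF c2 \<mu>_nonneg] emeasure_domain[symmetric]
    using \<Omega>_open weight_gap_decay[OF assms, folded c2_def] by (intro L1_xy_le) auto
  ultimately have "L1_sx \<Omega> (\<lambda>s x. n t s x - ns s x) + L1_xy \<Omega> (\<lambda>x y. w t x y - ws x y)
      \<le> ennreal (c1 * \<mu>) + ennreal (c2 * \<mu> * \<mu>)"
    by (rule add_mono)
  also have "\<dots> = ennreal (c1 * \<mu> + c2 * \<mu> * \<mu>)"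
    using c1 c2 \<mu>_nonneg by (intro ennreal_plus[symmetric]) auto
  also have "c1 * \<mu> + c2 * \<mu> * \<mu>
      = (1 / p_low + 1 + 2 * \<mu>) * \<mu> * initial_gap * exp (- t / 2)"
    by (simp add: c1_def c2_def algebra_simps)
  finally show ?thesis .
qed

theorem convergence_to_stationary_state:
  "(\<exists>C>0. \<exists>lam>0. \<forall>t\<ge>0.
      L1_sx \<Omega> (\<lambda>s x. n t s x - ns s x) + L1_xy \<Omega> (\<lambda>x y. w t x y - ws x y)
        \<le> ennreal (C * exp (- lam * t)) * L1_xy \<Omega> (\<lambda>x y. w0 x y - ws x y)) \<and>
   (\<exists>C>0. \<exists>lam>0. \<forall>t\<ge>0. L1_x \<Omega> (\<lambda>x. S t x - Ss x) \<le> ennreal (C * exp (- lam * t))) \<and>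
   (\<exists>C>0. \<exists>lam>0. \<forall>t\<ge>0. L1_x \<Omega> (\<lambda>x. N t x - Ns x) \<le> ennreal (C * exp (- lam * t)))"
proof (intro conjI)
  show "\<exists>C>0. \<exists>lam>0. \<forall>t\<ge>0.
      L1_sx \<Omega> (\<lambda>s x. n t s x - ns s x) + L1_xy \<Omega> (\<lambda>x y. w t x y - ws x y)
        \<le> ennreal (C * exp (- lam * t)) * L1_xy \<Omega> (\<lambda>x y. w0 x y - ws x y)"
    by (rule relative_exp_decay_witness[OF _ initial_gap_nonneg _ L1_state_decay])
       (use p_low_pos L1_initial_gap_pos L1_initial_gap_finite in auto)
  show "\<exists>C>0. \<exists>lam>0. \<forall>t\<ge>0. L1_x \<Omega> (\<lambda>x. S t x - Ss x) \<le> ennreal (C * exp (- lam * t))"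
    by (rule exp_decay_witness[OF L1_input_decay])
  show "\<exists>C>0. \<exists>lam>0. \<forall>t\<ge>0. L1_x \<Omega> (\<lambda>x. N t x - Ns x) \<le> ennreal (C * exp (- lam * t))"
    by (rule exp_decay_witness[OF L1_activity_decay])
qed

end

theorem mainTheorem12:
  fixes \<Omega> :: "'a::euclidean_space set"
    and I :: "'a \<Rightarrow> real"
    and G :: "real \<times> real \<Rightarrow> real"
    and G' :: "real \<times> real \<Rightarrow> real \<times> real \<Rightarrow> real"
    and n0 :: "real \<Rightarrow> 'a \<Rightarrow> real"
    and w0 :: "'a \<Rightarrow> 'a \<Rightarrow> real"
    and g :: "'a \<Rightarrow> real"
    and p_low p_inf :: real
  assumes dom: "bounded_domain \<Omega>"
    and I_cont: "continuous_on \<Omega> I" and I_bdd: "bounded (I ` \<Omega>)"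
    and G_smooth: "smooth G"
    and G_deriv: "\<And>z. (G has_derivative G' z) (at z)"
    and G_norm: "\<exists>a b. a + b \<le> 1 \<and> (\<forall>z. \<bar>G z\<bar> \<le> a) \<and> (\<forall>z. onorm (G' z) \<le> b)"
    and n0_reg: "Cb_L1s \<Omega> n0"
    and n0_nonneg: "\<And>s x. s > 0 \<Longrightarrow> x \<in> \<Omega> \<Longrightarrow> n0 s x \<ge> 0"
    and w0_cont: "continuous_on (\<Omega> \<times> \<Omega>) (\<lambda>(x, y). w0 x y)"
    and w0_bdd: "bounded ((\<lambda>(x, y). w0 x y) ` (\<Omega> \<times> \<Omega>))"
    and w0_nonneg: "\<And>x y. x \<in> \<Omega> \<Longrightarrow> y \<in> \<Omega> \<Longrightarrow> w0 x y \<ge> 0"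
    and g_def: "\<And>x. x \<in> \<Omega> \<Longrightarrow> g x = (LINT s:{0<..}|lborel. n0 s x)"
    and g_int: "set_integrable lborel \<Omega> g" and g_mass: "(LINT x:\<Omega>|lborel. g x) = 1"
    and p_low_pos: "p_low > 0" and p_inf_pos: "p_inf > 0"
  shows "\<exists>\<gamma>0>0. \<exists>\<delta>0>0. \<forall>\<gamma> p ns Ns Ss ws n N S w.
      0 < \<gamma> \<and> \<gamma> < \<gamma>0 \<and>
      W1inf p \<and> (\<forall>s>0. \<forall>S'. p_low \<le> p s S' \<and> p s S' \<le> p_inf) \<and> dS_bound p \<delta>0 \<and>
      stationary_state \<Omega> p \<gamma> G I g ns Ns Ss ws \<and>
      limit_solution \<Omega> p \<gamma> G I g w0 n N S w
      \<longrightarrow>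
      (\<exists>C>0. \<exists>lam>0. \<forall>t\<ge>0.
         L1_sx \<Omega> (\<lambda>s x. n t s x - ns s x) + L1_xy \<Omega> (\<lambda>x y. w t x y - ws x y)
           \<le> ennreal (C * exp (- lam * t)) * L1_xy \<Omega> (\<lambda>x y. w0 x y - ws x y)) \<and>
      (\<exists>C>0. \<exists>lam>0. \<forall>t\<ge>0. L1_x \<Omega> (\<lambda>x. S t x - Ss x) \<le> ennreal (C * exp (- lam * t))) \<and>
      (\<exists>C>0. \<exists>lam>0. \<forall>t\<ge>0. L1_x \<Omega> (\<lambda>x. N t x - Ns x) \<le> ennreal (C * exp (- lam * t)))"
proof -
  have domain: "open \<Omega>" "bounded \<Omega>" "\<Omega> \<noteq> {}"
    using dom unfolding bounded_domain_def by auto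
  have g_nonneg: "0 \<le> g x" if "x \<in> \<Omega>" for x
    unfolding g_def[OF that] set_lebesgue_integral_def
    using n0_nonneg that by (intro integral_nonneg_AE) (auto simp: indicator_def)
  obtain B where "0 \<le> B" and g_le: "\<And>x. x \<in> \<Omega> \<Longrightarrow> g x \<le> B"
    using bounded_Cb_L1s_integral[OF n0_reg] g_def by (metis abs_le_D1)
  have g_cont: "continuous_on \<Omega> g"
    using continuous_on_Cb_L1s_integral[OF n0_reg] g_def by (simp cong: continuous_on_cong)
  have G_cont: "continuous_on UNIV G"
    using G_deriv by (intro continuous_at_imp_continuous_on ballI has_derivative_continuous) blast
  define \<delta>0 where "\<delta>0 = p_low ^ 2 / (16 * (B + 1) * (p_inf + 1) * p_inf ^ 2)"
  have "0 < \<delta>0" and small: "16 * (B + 1) * (p_inf + 1) * ((p_inf / p_low) ^ 2 * \<delta>0) \<le> 1"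
    using \<open>0 \<le> B\<close> p_low_pos p_inf_pos by (simp_all add: \<delta>0_def power_divide)
  have setting: "network_solutions p p_low p_inf \<Omega> \<gamma> \<delta>0 B G I g w0 ns Ns Ss ws n N S w"
    if "0 < \<gamma>" "\<gamma> < 1" "W1inf p" "\<forall>s>0. \<forall>S'. p_low \<le> p s S' \<and> p s S' \<le> p_inf" "dS_bound p \<delta>0"
      "stationary_state \<Omega> p \<gamma> G I g ns Ns Ss ws" "limit_solution \<Omega> p \<gamma> G I g w0 n N S w"
    for \<gamma> p ns Ns Ss ws n N S w
    using that domain I_cont G_cont bound_lipschitz_of_norm_bound[OF G_deriv G_norm] g_nonneg g_le
      g_cont g_int g_mass w0_cont w0_bdd p_low_pos \<open>0 < \<delta>0\<close> small
    by unfold_locales auto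
  show ?thesis
    by (rule exI[of _ "1 :: real"], rule conjI[OF zero_less_one], rule exI[of _ \<delta>0], rule conjI[OF \<open>0 < \<delta>0\<close>])
       (intro allI impI; elim conjE; rule network_solutions.convergence_to_stationary_state[OF setting]; assumption)
qed

end
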